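(* Let $R$ be an invariant Bezout domain which is a ring of simple range 2. Then $R$ is a D-K elementary divisor ring.
   Context: All rings are associative with nonzero identity. A Bezout domain is a domain in which every finitely generated right ideal and every finitely generated left ideal is principal. A nonzero element $a$ is invariant if $aR=Ra$; a domain is invariant if every nonzero element is invariant. For $x\in R$, $RxR$ denotes the two-sided ideal generated by $x$. A ring $R$ is called a ring of simple range 2 if for all $a,b,c\in R$ with $c\neq 0$ and $RaR+RbR+RcR=R$ there exist $p,q\in R$ such that $R(pa+qb)R+RpcR=R$. Two matrices $A,B$ over $R$ are equivalent if $B=PAQ$ for invertible $P,Q$. $R$ is a D-K elementary divisor ring if every (rectangular) matrix over $R$ is equivalent to a matrix $\mathrm{diag}(\varepsilon_1,\dots,\varepsilon_r,0,\dots,0)$ such that $R\varepsilon_{i+1}R\subseteq \varepsilon_iR\cap R\varepsilon_i$ for $i=1,\dots,r-1$ and $\varepsilon_1,\dots,\varepsilon_{r-1}$ are invariant elements. *)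

theory Defs
  imports Main "Jordan_Normal_Form.Matrix"
begin

text \<open>Rings are of class ring_1 (associative, with 1, not necessarily commutative).
  A domain is a ring_1_no_zero_divisors (in particular 0 is not 1).\<close>

definition right_principal :: "'a::ring_1 \<Rightarrow> 'a set" where
  "right_principal a = {a * r | r. True}"

definition left_principal :: "'a::ring_1 \<Rightarrow> 'a set" where
  "left_principal a = {r * a | r. True}"

definition two_sided_ideal :: "'a::ring_1 \<Rightarrow> 'a set" where
  "two_sided_ideal x = {y. \<exists>(n::nat) (r::nat \<Rightarrow> 'a) (s::nat \<Rightarrow> 'a). y = (\<Sum>i<n. r i * x * s i)}"

definition right_ideal_gen :: "'a::ring_1 set \<Rightarrow> 'a set" where
  "right_ideal_gen S = {(\<Sum>a\<in>S. a * f a) | f. True}"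

definition left_ideal_gen :: "'a::ring_1 set \<Rightarrow> 'a set" where
  "left_ideal_gen S = {(\<Sum>a\<in>S. f a * a) | f. True}"

definition bezout_ring :: "'a::ring_1 itself \<Rightarrow> bool" where
  "bezout_ring TYPE('a) \<longleftrightarrow>
     (\<forall>S::'a set. finite S \<longrightarrow> (\<exists>d. right_ideal_gen S = right_principal d)) \<and>
     (\<forall>S::'a set. finite S \<longrightarrow> (\<exists>d. left_ideal_gen S = left_principal d))"

definition invariant_elem :: "'a::ring_1 \<Rightarrow> bool" where
  "invariant_elem a \<longleftrightarrow> a \<noteq> 0 \<and> right_principal a = left_principal a"

definition invariant_ring :: "'a::ring_1 itself \<Rightarrow> bool" where
  "invariant_ring TYPE('a) \<longleftrightarrow> (\<forall>a::'a. a \<noteq> 0 \<longrightarrow> invariant_elem a)"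

definition simple_range_2 :: "'a::ring_1 itself \<Rightarrow> bool" where
  "simple_range_2 TYPE('a) \<longleftrightarrow>
    (\<forall>a b c::'a. c \<noteq> 0 \<longrightarrow>
       {u + v + w | u v w. u \<in> two_sided_ideal a \<and> v \<in> two_sided_ideal b \<and> w \<in> two_sided_ideal c} = UNIV \<longrightarrow>
       (\<exists>p q. {u + v | u v. u \<in> two_sided_ideal (p * a + q * b) \<and> v \<in> two_sided_ideal (p * c)} = UNIV))"

definition DK_elementary_divisor_ring :: "'a::ring_1 itself \<Rightarrow> bool" where
  "DK_elementary_divisor_ring TYPE('a) \<longleftrightarrow>
    (\<forall>m n (A::'a mat). A \<in> carrier_mat m n \<longrightarrow>
      (\<exists>P Q (eps::nat \<Rightarrow> 'a) r.
         P \<in> carrier_mat m m \<and> invertible_mat P \<and>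
         Q \<in> carrier_mat n n \<and> invertible_mat Q \<and>
         r \<le> min m n \<and>
         P * A * Q = mat m n (\<lambda>(i, j). if i = j \<and> i < r then eps i else 0) \<and>
         (\<forall>i<r. eps i \<noteq> 0) \<and>
         (\<forall>i. i + 1 < r \<longrightarrow>
            two_sided_ideal (eps (i + 1)) \<subseteq> right_principal (eps i) \<inter> left_principal (eps i)
            \<and> invariant_elem (eps i))))"

end

theory Submission
  imports Defs
begin

text \<open>In an invariant domain every right ideal \<open>aR\<close> is two-sided, so divisibility behaves much as
  in the commutative case, and a right unimodular pair can be completed to an invertible \<open>2 \<times> 2\<close>
  matrix. By the Bezout property a row or column \<open>(x, y)\<close> can thus be transformed into
  \<open>(d, 0)\<close> with \<open>d\<close> a common divisor, and simple range 2 is exactly what is needed to make the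
  corner of a \<open>2 \<times> 2\<close> matrix, after multiplying by invertible matrices on both sides, divide all
  four entries. Embedding these \<open>2 \<times> 2\<close> operations into larger matrices, one diagonalises an
  arbitrary matrix stage by stage: at stage \<open>s\<close> the pivot \<open>(s, s)\<close> is made to divide every entry
  of the remaining lower right block, which yields \<open>\<epsilon> (s + 1) \<in> \<epsilon> s R\<close>, and invariance turns this
  into \<open>R \<epsilon> (s + 1) R \<subseteq> \<epsilon> s R = R \<epsilon> s\<close>.\<close>

section \<open>Principal right ideals\<close>

lemma right_principal_iff: "x \<in> right_principal a \<longleftrightarrow> (\<exists>r. x = a * r)"
  unfolding right_principal_def by blast

lemma right_principal_self [simp]: "a \<in> right_principal a"
  unfolding right_principal_iff by (rule exI[of _ 1]) simp

lemma zero_in_right_principal [simp]: "0 \<in> right_principal a"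
  unfolding right_principal_iff by (rule exI[of _ 0]) simp

lemma right_principal_zero [simp]: "x \<in> right_principal 0 \<longleftrightarrow> x = 0"
  unfolding right_principal_iff by simp

lemma right_principal_add:
  assumes "x \<in> right_principal a" "y \<in> right_principal a"
  shows "x + y \<in> right_principal a"
proof -
  obtain r s where "x = a * r" "y = a * s" using assms unfolding right_principal_iff by blast
  then have "x + y = a * (r + s)" by (simp add: distrib_left)
  then show ?thesis unfolding right_principal_iff ..
qed

lemma right_principal_mult_right:
  assumes "x \<in> right_principal a"
  shows "x * r \<in> right_principal a"
proof -
  obtain s where "x = a * s" using assms unfolding right_principal_iff by blast
  then have "x * r = a * (s * r)" by (simp add: mult.assoc)
  then show ?thesis unfolding right_principal_iff ..
qed

lemma right_principal_trans:
  assumes "x \<in> right_principal b" "b \<in> right_principal a"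
  shows "x \<in> right_principal a"
proof -
  obtain r s where "x = b * r" "b = a * s" using assms unfolding right_principal_iff by blast
  then have "x = a * (s * r)" by (simp add: mult.assoc)
  then show ?thesis unfolding right_principal_iff ..
qed

lemma two_sided_ideal_mult_right: "x * t \<in> two_sided_ideal x"
proof -
  have "x * t = (\<Sum>i<(1::nat). (\<lambda>_. 1) i * x * (\<lambda>_. t) i)" by simp
  then show ?thesis unfolding two_sided_ideal_def
    by (intro CollectI exI[of _ 1] exI[of _ "\<lambda>_. 1"] exI[of _ "\<lambda>_. t"])
qed

context
  assumes invariant: "invariant_ring TYPE('a::ring_1)"
begin

lemma shift_factor_right: "\<exists>r'. r * a = (a::'a) * r'"
proof (cases "a = 0")
  case False
  then have "r * a \<in> right_principal a"
    using invariant unfolding invariant_ring_def invariant_elem_def left_principal_def by blast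
  then show ?thesis unfolding right_principal_iff .
qed simp

lemma shift_factor_left: "\<exists>r'. (a::'a) * r = r' * a"
proof (cases "a = 0")
  case False
  then have "a * r \<in> left_principal a"
    using invariant unfolding invariant_ring_def invariant_elem_def right_principal_def by blast
  then show ?thesis unfolding left_principal_def by blast
qed simp

lemma right_principal_mult_left:
  assumes "x \<in> right_principal (a::'a)"
  shows "r * x \<in> right_principal a"
proof -
  obtain r' where "r * x = x * r'" using shift_factor_right by blast
  then show ?thesis using right_principal_mult_right[OF assms] by simp
qed

lemma two_sided_ideal_subset_right_principal: "two_sided_ideal x \<subseteq> right_principal (x::'a)"
proof
  fix y assume "y \<in> two_sided_ideal x"
  then obtain n r s where y: "y = (\<Sum>i<(n::nat). r i * x * s i)"
    unfolding two_sided_ideal_def by blast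
  have "r i * x * s i \<in> right_principal x" for i
    using right_principal_mult_left[OF right_principal_self] by (rule right_principal_mult_right)
  then show "y \<in> right_principal x" unfolding y by (induction n) (simp_all add: right_principal_add)
qed

lemma simple_range_2_right_unimodular:
  assumes sr2: "simple_range_2 TYPE('a)"
    and unimodular: "a * \<alpha> + b * \<beta> + c * \<gamma> = 1" and "c \<noteq> (0::'a)"
  shows "\<exists>p q \<rho> \<tau>. (p * a + q * b) * \<rho> + p * c * \<tau> = 1"
proof -
  have "z \<in> {u + v + w | u v w. u \<in> two_sided_ideal a \<and> v \<in> two_sided_ideal b
      \<and> w \<in> two_sided_ideal c}" for z
  proof -
    have "z = (a * \<alpha> + b * \<beta> + c * \<gamma>) * z" using unimodular by simp
    also have "\<dots> = a * (\<alpha> * z) + b * (\<beta> * z) + c * (\<gamma> * z)" by (simp add: algebra_simps)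
    finally show ?thesis using two_sided_ideal_mult_right by blast
  qed
  then obtain p q where
    "{u + v | u v. u \<in> two_sided_ideal (p * a + q * b) \<and> v \<in> two_sided_ideal (p * c)} = UNIV"
    using sr2 \<open>c \<noteq> 0\<close> unfolding simple_range_2_def by blast
  then obtain u v where uv: "1 = u + v"
    and "u \<in> two_sided_ideal (p * a + q * b)" "v \<in> two_sided_ideal (p * c)"
    by blast
  then have "u \<in> right_principal (p * a + q * b)" "v \<in> right_principal (p * c)"
    using two_sided_ideal_subset_right_principal by blast+
  then obtain \<rho> \<tau> where "u = (p * a + q * b) * \<rho>" "v = p * c * \<tau>"
    unfolding right_principal_iff by blast
  then show ?thesis using uv by auto
qed

end

lemma right_ideal_gen_pair:
  assumes "x \<noteq> y"
  shows "right_ideal_gen {x, y} = {x * \<alpha> + y * \<beta> | \<alpha> \<beta>. True}"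
proof (intro equalityI subsetI)
  fix z assume "z \<in> right_ideal_gen {x, y}"
  then obtain f where "z = (\<Sum>a\<in>{x, y}. a * f a)" unfolding right_ideal_gen_def by blast
  then have "z = x * f x + y * f y" using assms by simp
  then show "z \<in> {x * \<alpha> + y * \<beta> | \<alpha> \<beta>. True}" by blast
next
  fix z assume "z \<in> {x * \<alpha> + y * \<beta> | \<alpha> \<beta>. True}"
  then obtain \<alpha> \<beta> where "z = x * \<alpha> + y * \<beta>" by blast
  then have "z = (\<Sum>a\<in>{x, y}. a * (if a = x then \<alpha> else \<beta>)) \<and> True" using assms by simp
  then show "z \<in> right_ideal_gen {x, y}" unfolding right_ideal_gen_def mem_Collect_eq
    by (rule exI[of _ "\<lambda>a. if a = x then \<alpha> else \<beta>"])
qed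

lemma bezout_pair_right:
  assumes "bezout_ring TYPE('a::ring_1)"
  shows "\<exists>d \<alpha> \<beta>. d = x * \<alpha> + (y::'a) * \<beta> \<and> x \<in> right_principal d \<and> y \<in> right_principal d"
proof (cases "x = y")
  case True
  show ?thesis
    by (rule exI[of _ x], rule exI[of _ 1], rule exI[of _ 0]) (simp add: True)
next
  case False
  note gen = right_ideal_gen_pair[OF False]
  obtain d where d: "right_ideal_gen {x, y} = right_principal d"
    using assms finite.emptyI finite.insertI unfolding bezout_ring_def by metis
  have "x = x * 1 + y * 0" "y = x * 0 + y * 1" by simp_all
  then have "x \<in> right_principal d" "y \<in> right_principal d"
    unfolding d[symmetric] gen by blast+
  moreover have "d \<in> right_ideal_gen {x, y}" unfolding d by simp
  then have "\<exists>\<alpha> \<beta>. d = x * \<alpha> + y * \<beta>" unfolding gen by blast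
  ultimately show ?thesis by blast
qed

lemma bezout_triple_right:
  assumes "bezout_ring TYPE('a::ring_1)"
  shows "\<exists>g \<alpha> \<beta> \<gamma>. g = a * \<alpha> + b * \<beta> + c * \<gamma>
    \<and> a \<in> right_principal g \<and> b \<in> right_principal g \<and> (c::'a) \<in> right_principal g"
proof -
  obtain d \<alpha> \<beta> where d: "d = a * \<alpha> + b * \<beta>" "a \<in> right_principal d" "b \<in> right_principal d"
    using bezout_pair_right[OF assms] by blast
  obtain g \<gamma> \<delta> where g: "g = d * \<gamma> + c * \<delta>" "d \<in> right_principal g" "c \<in> right_principal g"
    using bezout_pair_right[OF assms] by blast
  have "g = a * (\<alpha> * \<gamma>) + b * (\<beta> * \<gamma>) + c * \<delta>" unfolding g(1) d(1) by (simp add: algebra_simps)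
  moreover have "a \<in> right_principal g" "b \<in> right_principal g"
    using d(2,3) g(2) right_principal_trans by blast+
  ultimately show ?thesis using g(3) by blast
qed

section \<open>Reduction of \<open>2 \<times> 2\<close> matrices\<close>

text \<open>\<open>(a, b, c, d)\<close> stands for the matrix with rows \<open>(a, b)\<close> and \<open>(c, d)\<close>.\<close>

type_synonym 'a mat2 = "'a \<times> 'a \<times> 'a \<times> 'a"

fun mat2_mult :: "'a::ring_1 mat2 \<Rightarrow> 'a mat2 \<Rightarrow> 'a mat2" where
  "mat2_mult (a, b, c, d) (e, f, g, h) =
    (a * e + b * g, a * f + b * h, c * e + d * g, c * f + d * h)"

definition mat2_invertible :: "'a::ring_1 mat2 \<Rightarrow> bool" where
  "mat2_invertible M \<longleftrightarrow> (\<exists>N. mat2_mult M N = (1, 0, 0, 1) \<and> mat2_mult N M = (1, 0, 0, 1))"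

lemma mat2_mult_assoc: "mat2_mult (mat2_mult A B) C = mat2_mult A (mat2_mult B C)"
  by (cases A; cases B; cases C) (simp add: algebra_simps)

lemma mat2_mult_one [simp]: "mat2_mult (1, 0, 0, 1) A = A" "mat2_mult A (1, 0, 0, 1) = A"
  by (cases A; simp)+

lemma mat2_invertibleI:
  "mat2_mult M N = (1, 0, 0, 1) \<Longrightarrow> mat2_mult N M = (1, 0, 0, 1) \<Longrightarrow> mat2_invertible M"
  unfolding mat2_invertible_def by blast

lemma mat2_invertible_one: "mat2_invertible (1, 0, 0, 1)"
  by (rule mat2_invertibleI[of _ "(1, 0, 0, 1)"]) simp_all

lemma mat2_invertible_swap: "mat2_invertible (0, 1, 1, 0)"
  by (rule mat2_invertibleI[of _ "(0, 1, 1, 0)"]) simp_all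

lemma mat2_invertible_transvection: "mat2_invertible (1, 0, - t, 1)"
  by (rule mat2_invertibleI[of _ "(1, 0, t, 1)"]) simp_all

lemma mat2_invertible_diag:
  "u * v = 1 \<Longrightarrow> v * u = 1 \<Longrightarrow> mat2_invertible (u, 0, 0, 1)"
  by (rule mat2_invertibleI[of _ "(v, 0, 0, 1)"]) simp_all

lemma mat2_invertible_mult:
  assumes "mat2_invertible A" "mat2_invertible B"
  shows "mat2_invertible (mat2_mult A B)"
proof -
  obtain A' where A: "mat2_mult A A' = (1, 0, 0, 1)" "mat2_mult A' A = (1, 0, 0, 1)"
    using assms(1) unfolding mat2_invertible_def by blast
  obtain B' where B: "mat2_mult B B' = (1, 0, 0, 1)" "mat2_mult B' B = (1, 0, 0, 1)"
    using assms(2) unfolding mat2_invertible_def by blast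
  show ?thesis
  proof (rule mat2_invertibleI)
    have "mat2_mult (mat2_mult A B) (mat2_mult B' A') = mat2_mult A (mat2_mult (mat2_mult B B') A')"
      by (simp only: mat2_mult_assoc)
    then show "mat2_mult (mat2_mult A B) (mat2_mult B' A') = (1, 0, 0, 1)"
      by (simp only: B A mat2_mult_one)
    have "mat2_mult (mat2_mult B' A') (mat2_mult A B) = mat2_mult B' (mat2_mult (mat2_mult A' A) B)"
      by (simp only: mat2_mult_assoc)
    then show "mat2_mult (mat2_mult B' A') (mat2_mult A B) = (1, 0, 0, 1)"
      by (simp only: B A mat2_mult_one)
  qed
qed

context
  assumes invariant: "invariant_ring TYPE('a::ring_1_no_zero_divisors)"
begin

lemma unimodular_complement_right:
  assumes unimod: "a * \<alpha> + b * \<beta> = (1::'a)"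
  shows "\<exists>s. a * s = 1 - \<beta> * b"
proof -
  define z where "z = 1 - \<beta> * b"
  obtain w where w: "\<beta> * z = z * w" using shift_factor_right[OF invariant] by blast
  have a\<alpha>: "a * \<alpha> = 1 - b * \<beta>" using unimod by (simp add: eq_diff_eq)
  have bz: "b * z = a * \<alpha> * b" unfolding z_def a\<alpha> by (simp add: algebra_simps)
  have "z = (a * \<alpha> + b * \<beta>) * z" using unimod by simp
  also have "\<dots> = a * \<alpha> * z + (b * z) * w" by (simp add: algebra_simps w)
  also have "\<dots> = a * (\<alpha> * z + \<alpha> * b * w)" unfolding bz by (simp add: algebra_simps)
  finally have "a * (\<alpha> * z + \<alpha> * b * w) = z" by (rule sym)
  then show ?thesis unfolding z_def by (rule exI)
qed

lemma unimodular_complement_left: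
  assumes unimod: "\<alpha> * a + \<beta> * b = (1::'a)"
  shows "\<exists>s. s * a = 1 - b * \<beta>"
proof -
  define z where "z = 1 - b * \<beta>"
  obtain w where w: "z * \<beta> = w * z" using shift_factor_left[OF invariant] by blast
  have \<alpha>a: "\<alpha> * a = 1 - \<beta> * b" using unimod by (simp add: eq_diff_eq)
  have zb: "z * b = b * \<alpha> * a" unfolding z_def mult.assoc \<alpha>a by (simp add: algebra_simps)
  have "z = z * (\<alpha> * a + \<beta> * b)" using unimod by simp
  also have "\<dots> = z * \<alpha> * a + (z * \<beta>) * b" by (simp add: algebra_simps)
  also have "\<dots> = z * \<alpha> * a + w * (z * b)" unfolding w by (simp add: mult.assoc)
  also have "\<dots> = (z * \<alpha> + w * b * \<alpha>) * a" unfolding zb by (simp add: algebra_simps)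
  finally have "(z * \<alpha> + w * b * \<alpha>) * a = z" by (rule sym)
  then show ?thesis unfolding z_def by (rule exI)
qed

lemma unimodular_column_completion:
  assumes unimod: "a * \<alpha> + b * \<beta> = (1::'a)" and "a \<noteq> 0"
  shows "\<exists>c. mat2_invertible (\<alpha>, - c, \<beta>, a) \<and> b * a = a * c"
proof -
  obtain c where c: "b * a = a * c" using shift_factor_right[OF invariant] by blast
  obtain t where t: "\<beta> * a = a * t" using shift_factor_right[OF invariant] by blast
  obtain s where s: "a * s = 1 - \<beta> * b" using unimodular_complement_right[OF unimod] by blast
  have cancel: "x = y" if "a * x = a * y" for x y using that \<open>a \<noteq> 0\<close> by simp
  have "a * (\<alpha> * a + c * t) = a * \<alpha> * a + (a * c) * t" by (simp add: algebra_simps)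
  also have "\<dots> = a * \<alpha> * a + b * (\<beta> * a)" by (simp add: c[symmetric] t[symmetric] mult.assoc)
  also have "\<dots> = (a * \<alpha> + b * \<beta>) * a" by (simp add: algebra_simps)
  also have "\<dots> = a * 1" using unimod by simp
  finally have 1: "\<alpha> * a + c * t = 1" by (rule cancel)
  have "a * (\<alpha> * b - c * s) = a * \<alpha> * b - (a * c) * s" by (simp add: algebra_simps)
  also have "\<dots> = a * \<alpha> * b - b * (a * s)" by (simp add: c[symmetric] mult.assoc)
  also have "\<dots> = (a * \<alpha> + b * \<beta> - 1) * b" by (simp add: s algebra_simps)
  also have "\<dots> = a * 0" using unimod by simp
  finally have 2: "\<alpha> * b - c * s = 0" by (rule cancel)
  have "a * (s * \<beta> - t * \<alpha>) = (a * s) * \<beta> - (a * t) * \<alpha>" by (simp add: algebra_simps)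
  also have "\<dots> = \<beta> * (1 - (a * \<alpha> + b * \<beta>))" by (simp add: s t[symmetric] algebra_simps)
  also have "\<dots> = a * 0" using unimod by simp
  finally have 3: "s * \<beta> - t * \<alpha> = 0" by (rule cancel)
  have "a * (t * c + s * a) = (a * t) * c + (a * s) * a" by (simp add: algebra_simps)
  also have "\<dots> = \<beta> * (a * c) + (1 - \<beta> * b) * a" by (simp add: s t[symmetric] mult.assoc)
  also have "\<dots> = a * 1" by (simp add: c[symmetric] algebra_simps)
  finally have 4: "t * c + s * a = 1" by (rule cancel)
  have "mat2_invertible (\<alpha>, - c, \<beta>, a)"
    by (rule mat2_invertibleI[of _ "(a, b, - t, s)"]) (use 1 2 3 4 unimod c s in \<open>simp_all add: t\<close>)
  with c show ?thesis by blast
qed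

lemma unimodular_row_completion:
  assumes unimod: "\<alpha> * a + \<beta> * b = (1::'a)" and "a \<noteq> 0"
  shows "\<exists>c. mat2_invertible (\<alpha>, \<beta>, - c, a) \<and> a * b = c * a"
proof -
  obtain c where c: "a * b = c * a" using shift_factor_left[OF invariant] by blast
  obtain t where t: "a * \<beta> = t * a" using shift_factor_left[OF invariant] by blast
  obtain s where s: "s * a = 1 - b * \<beta>" using unimodular_complement_left[OF unimod] by blast
  have cancel: "x = y" if "x * a = y * a" for x y using that \<open>a \<noteq> 0\<close> by simp
  have "(a * \<alpha> + t * c) * a = a * \<alpha> * a + t * (c * a)" by (simp add: algebra_simps)
  also have "\<dots> = a * \<alpha> * a + (t * a) * b" by (simp add: c[symmetric] mult.assoc)
  also have "\<dots> = a * (\<alpha> * a + \<beta> * b)" by (simp add: t[symmetric] algebra_simps)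
  also have "\<dots> = 1 * a" using unimod by simp
  finally have 1: "a * \<alpha> + t * c = 1" by (rule cancel)
  have "(\<beta> * s - \<alpha> * t) * a = \<beta> * (s * a) - \<alpha> * (t * a)" by (simp add: algebra_simps)
  also have "\<dots> = (1 - (\<alpha> * a + \<beta> * b)) * \<beta>" by (simp add: s t[symmetric] algebra_simps)
  also have "\<dots> = 0 * a" using unimod by simp
  finally have 2: "\<beta> * s - \<alpha> * t = 0" by (rule cancel)
  have "(b * \<alpha> - s * c) * a = b * \<alpha> * a - s * (c * a)" by (simp add: algebra_simps)
  also have "\<dots> = b * \<alpha> * a - (s * a) * b" by (simp add: c[symmetric] mult.assoc)
  also have "\<dots> = b * (\<alpha> * a + \<beta> * b - 1)" by (simp add: s algebra_simps)
  also have "\<dots> = 0 * a" using unimod by simp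
  finally have 3: "b * \<alpha> - s * c = 0" by (rule cancel)
  have "(c * t + a * s) * a = c * (t * a) + a * (s * a)" by (simp add: algebra_simps)
  also have "\<dots> = (c * a) * \<beta> + a * (1 - b * \<beta>)" by (simp add: s t[symmetric] mult.assoc)
  also have "\<dots> = 1 * a" by (simp add: c[symmetric] algebra_simps)
  finally have 4: "c * t + a * s = 1" by (rule cancel)
  have "mat2_invertible (\<alpha>, \<beta>, - c, a)"
    by (rule mat2_invertibleI[of _ "(a, - t, b, s)"]) (use 1 2 3 4 unimod c s in \<open>simp_all add: t\<close>)
  with c show ?thesis by blast
qed

context
  assumes bezout: "bezout_ring TYPE('a)"
begin

lemma row_vector_reduction:
  "\<exists>a b c d e. mat2_invertible (a, b, c, d) \<and> x * a + y * c = e \<and> x * b + y * d = 0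
    \<and> x \<in> right_principal e \<and> (y::'a) \<in> right_principal e"
proof (cases "x = 0")
  case True
  then have "mat2_invertible (0, 1, 1, 0) \<and> x * 0 + y * 1 = y \<and> x * 1 + y * 0 = 0
    \<and> x \<in> right_principal y \<and> y \<in> right_principal y"
    using mat2_invertible_swap by simp
  then show ?thesis by blast
next
  case False
  obtain d \<alpha> \<beta> where d: "d = x * \<alpha> + y * \<beta>" "x \<in> right_principal d" "y \<in> right_principal d"
    using bezout_pair_right[OF bezout] by blast
  obtain a b where ab: "x = d * a" "y = d * b" using d(2,3) unfolding right_principal_iff by blast
  have "d \<noteq> 0" "a \<noteq> 0" using ab False by auto
  have "d * (a * \<alpha> + b * \<beta>) = x * \<alpha> + y * \<beta>" unfolding ab by (simp add: algebra_simps)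
  also have "\<dots> = d * 1" using d(1) by simp
  finally have unimod: "a * \<alpha> + b * \<beta> = 1" using \<open>d \<noteq> 0\<close> by simp
  obtain c where c: "mat2_invertible (\<alpha>, - c, \<beta>, a)" "b * a = a * c"
    using unimodular_column_completion[OF unimod \<open>a \<noteq> 0\<close>] by blast
  have "x * - c + y * a = d * (b * a - a * c)" unfolding ab by (simp add: algebra_simps)
  then have "x * - c + y * a = 0" using c(2) by simp
  then show ?thesis using c(1) d by blast
qed

lemma column_vector_reduction:
  "\<exists>a b c d e. mat2_invertible (a, b, c, d) \<and> a * x + b * y = e \<and> c * x + d * y = 0
    \<and> x \<in> right_principal e \<and> (y::'a) \<in> right_principal e"
proof (cases "x = 0")
  case True
  then have "mat2_invertible (0, 1, 1, 0) \<and> 0 * x + 1 * y = y \<and> 1 * x + 0 * y = 0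
    \<and> x \<in> right_principal y \<and> y \<in> right_principal y"
    using mat2_invertible_swap by simp
  then show ?thesis by blast
next
  case False
  obtain d \<alpha> \<beta> where d: "d = x * \<alpha> + y * \<beta>" "x \<in> right_principal d" "y \<in> right_principal d"
    using bezout_pair_right[OF bezout] by blast
  obtain \<alpha>' \<beta>' where \<alpha>': "x * \<alpha> = \<alpha>' * x" and \<beta>': "y * \<beta> = \<beta>' * y"
    using shift_factor_left[OF invariant] by metis
  obtain a0 b0 where "x = d * a0" "y = d * b0" using d(2,3) unfolding right_principal_iff by blast
  moreover obtain a b where "d * a0 = a * d" "d * b0 = b * d"
    using shift_factor_left[OF invariant] by metis
  ultimately have ab: "x = a * d" "y = b * d" by simp_all
  have "d \<noteq> 0" "a \<noteq> 0" using ab False by auto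
  have "(\<alpha>' * a + \<beta>' * b) * d = \<alpha>' * x + \<beta>' * y" unfolding ab by (simp add: algebra_simps)
  also have "\<dots> = x * \<alpha> + y * \<beta>" by (simp add: \<alpha>' \<beta>')
  also have "\<dots> = 1 * d" using d(1) by simp
  finally have unimod: "\<alpha>' * a + \<beta>' * b = 1" using \<open>d \<noteq> 0\<close> by simp
  obtain c where c: "mat2_invertible (\<alpha>', \<beta>', - c, a)" "a * b = c * a"
    using unimodular_row_completion[OF unimod \<open>a \<noteq> 0\<close>] by blast
  have "- c * x + a * y = (a * b - c * a) * d" unfolding ab by (simp add: algebra_simps)
  then have "- c * x + a * y = 0" using c(2) by simp
  moreover have "\<alpha>' * x + \<beta>' * y = d" using d(1) \<alpha>' \<beta>' by simp
  ultimately show ?thesis using c(1) d(2,3) by blast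
qed

lemma unimodular_row_extension:
  assumes "p * e + q * f = (1::'a)"
  shows "\<exists>r s. mat2_invertible (p, q, r, s)"
proof -
  obtain a b c d g where M: "mat2_invertible (a, b, c, d)" "p * a + q * c = g" "p * b + q * d = 0"
    and "p \<in> right_principal g" "q \<in> right_principal g"
    using row_vector_reduction by blast
  then have "p * e + q * f \<in> right_principal g"
    by (intro right_principal_add right_principal_mult_right)
  then obtain w where w: "g * w = 1" using assms unfolding right_principal_iff by auto
  then have "g \<noteq> 0" by auto
  have "g * (w * g) = g * 1" by (simp add: w mult.assoc[symmetric])
  then have w': "w * g = 1" using \<open>g \<noteq> 0\<close> by simp
  obtain N where N: "mat2_mult (a, b, c, d) N = (1, 0, 0, 1)"
      "mat2_mult N (a, b, c, d) = (1, 0, 0, 1)"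
    using M(1) unfolding mat2_invertible_def by blast
  obtain n0 n1 n2 n3 where Nd: "N = (n0, n1, n2, n3)" by (cases N)
  have "(p, q, 0, 0) = mat2_mult (mat2_mult (p, q, 0, 0) (a, b, c, d)) N"
    by (simp only: mat2_mult_assoc N(1) mat2_mult_one)
  also have "mat2_mult (p, q, 0, 0) (a, b, c, d) = (g, 0, 0, 0)" using M(2,3) by simp
  finally have "p = g * n0" "q = g * n1" unfolding Nd by simp_all
  then have "mat2_mult (g, 0, 0, 1) N = (p, q, n2, n3)" unfolding Nd by simp
  moreover have "mat2_invertible (mat2_mult (g, 0, 0, 1) N)"
    using mat2_invertible_mult[OF mat2_invertible_diag[OF w w'] mat2_invertibleI[OF N(2,1)]] .
  ultimately show ?thesis by auto
qed

end

lemma gcd_row_combination: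
  assumes sr2: "simple_range_2 TYPE('a)"
    and g: "g = a * \<alpha> + b * \<beta> + c * \<gamma>"
      "a \<in> right_principal g" "b \<in> right_principal g" "c \<in> right_principal g"
    and "c \<noteq> (0::'a)"
  shows "\<exists>p q e f \<rho> \<tau>. p * e + q * f = 1 \<and> (p * a + q * b) * \<rho> + p * c * \<tau> = g"
proof -
  obtain a1 b1 c1 where abc: "a = g * a1" "b = g * b1" "c = g * c1"
    using g(2-4) unfolding right_principal_iff by blast
  have "g \<noteq> 0" "c1 \<noteq> 0" using abc \<open>c \<noteq> 0\<close> by auto
  have "g * (a1 * \<alpha> + b1 * \<beta> + c1 * \<gamma>) = a * \<alpha> + b * \<beta> + c * \<gamma>"
    unfolding abc by (simp add: algebra_simps)
  also have "\<dots> = g * 1" using g(1) by simp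
  finally have "a1 * \<alpha> + b1 * \<beta> + c1 * \<gamma> = 1" using \<open>g \<noteq> 0\<close> by simp
  then obtain p1 q1 \<rho> \<tau> where pq1: "(p1 * a1 + q1 * b1) * \<rho> + p1 * c1 * \<tau> = 1"
    using simple_range_2_right_unimodular[OF invariant sr2] \<open>c1 \<noteq> 0\<close> by blast
  text \<open>Move the multipliers across \<open>g\<close>, so that they act on \<open>a, b, c\<close> instead of \<open>a1, b1, c1\<close>.\<close>
  obtain p q where p: "g * p1 = p * g" and q: "g * q1 = q * g"
    using shift_factor_left[OF invariant] by metis
  obtain e f where e: "g * (a1 * \<rho> + c1 * \<tau>) = e * g" and f: "g * (b1 * \<rho>) = f * g"
    using shift_factor_left[OF invariant] by metis
  have "(p * e + q * f) * g = p * (e * g) + q * (f * g)" by (simp add: algebra_simps)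
  also have "\<dots> = (p * g) * (a1 * \<rho> + c1 * \<tau>) + (q * g) * (b1 * \<rho>)"
    by (simp add: e[symmetric] f[symmetric] mult.assoc)
  also have "\<dots> = g * ((p1 * a1 + q1 * b1) * \<rho> + p1 * c1 * \<tau>)"
    by (simp add: p[symmetric] q[symmetric] algebra_simps)
  also have "\<dots> = 1 * g" using pq1 by simp
  finally have "p * e + q * f = 1" using \<open>g \<noteq> 0\<close> by simp
  moreover have "(p * a + q * b) * \<rho> + p * c * \<tau> = g"
  proof -
    have "(p * a + q * b) * \<rho> + p * c * \<tau> = ((p * g) * a1 + (q * g) * b1) * \<rho> + (p * g) * c1 * \<tau>"
      unfolding abc by (simp add: mult.assoc)
    also have "\<dots> = g * ((p1 * a1 + q1 * b1) * \<rho> + p1 * c1 * \<tau>)"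
      by (simp add: p[symmetric] q[symmetric] algebra_simps)
    finally show ?thesis using pq1 by simp
  qed
  ultimately show ?thesis by blast
qed

context
  assumes bezout: "bezout_ring TYPE('a)" and sr2: "simple_range_2 TYPE('a)"
begin

lemma mat2_corner_divides_entries_lower_right_zero:
  "\<exists>P Q. mat2_invertible P \<and> mat2_invertible Q
    \<and> {a, b, c} \<subseteq> right_principal (fst (mat2_mult (mat2_mult P (a, c, b, 0)) Q :: 'a mat2))"
proof (cases "c = 0")
  case True
  obtain k0 k1 k2 k3 e where K: "mat2_invertible (k0, k1, k2, k3)" "k0 * a + k1 * b = e"
    and "a \<in> right_principal e" "b \<in> right_principal e"
    using column_vector_reduction[OF bezout] by blast
  then have "{a, b, c} \<subseteq>
      right_principal (fst (mat2_mult (mat2_mult (k0, k1, k2, k3) (a, c, b, 0)) (1, 0, 0, 1)))"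
    using True by simp
  then show ?thesis using K(1) mat2_invertible_one by blast
next
  case False
  obtain g \<alpha> \<beta> \<gamma> where g: "g = a * \<alpha> + b * \<beta> + c * \<gamma>"
      "a \<in> right_principal g" "b \<in> right_principal g" "c \<in> right_principal g"
    using bezout_triple_right[OF bezout] by blast
  obtain p q e f \<rho> \<tau> where pq: "p * e + q * f = 1" "(p * a + q * b) * \<rho> + p * c * \<tau> = g"
    using gcd_row_combination[OF sr2 g False] by blast
  obtain r s where P: "mat2_invertible (p, q, r, s)"
    using unimodular_row_extension[OF bezout pq(1)] by blast
  obtain k0 k1 k2 k3 u where K: "mat2_invertible (k0, k1, k2, k3)"
      "(p * a + q * b) * k0 + (p * c) * k2 = u"
    and "p * a + q * b \<in> right_principal u" "p * c \<in> right_principal u"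
    using row_vector_reduction[OF bezout] by blast
  then have "g \<in> right_principal u"
    unfolding pq(2)[symmetric] by (blast intro: right_principal_add right_principal_mult_right)
  then have "{a, b, c} \<subseteq> right_principal u" using g(2-4) right_principal_trans by blast
  moreover have "fst (mat2_mult (mat2_mult (p, q, r, s) (a, c, b, 0)) (k0, k1, k2, k3)) = u"
    using K(2) by simp
  ultimately show ?thesis using P K(1) by metis
qed

lemma mat2_corner_divides_entries:
  "\<exists>P Q. mat2_invertible P \<and> mat2_invertible Q \<and> {x00, x01, x10, x11}
    \<subseteq> right_principal (fst (mat2_mult (mat2_mult P (x00, x01, x10, x11)) Q :: 'a mat2))"
proof -
  obtain k0 k1 k2 k3 c where K: "mat2_invertible (k0, k1, k2, k3)"
      "k0 * x01 + k1 * x11 = c" "k2 * x01 + k3 * x11 = 0"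
    using column_vector_reduction[OF bezout] by blast
  define a where "a = k0 * x00 + k1 * x10"
  define b where "b = k2 * x00 + k3 * x10"
  have KX: "mat2_mult (k0, k1, k2, k3) (x00, x01, x10, x11) = (a, c, b, 0)"
    using K(2,3) by (simp add: a_def b_def)
  obtain P Q where PQ: "mat2_invertible P" "mat2_invertible Q"
      "{a, b, c} \<subseteq> right_principal (fst (mat2_mult (mat2_mult P (a, c, b, 0)) Q))"
    using mat2_corner_divides_entries_lower_right_zero by blast
  obtain N where "mat2_mult N (k0, k1, k2, k3) = (1, 0, 0, 1)"
    using K(1) unfolding mat2_invertible_def by blast
  then have "(x00, x01, x10, x11) = mat2_mult N (a, c, b, 0)"
    by (simp only: KX[symmetric] mat2_mult_assoc[symmetric] mat2_mult_one)
  moreover obtain n0 n1 n2 n3 where "N = (n0, n1, n2, n3)" by (cases N)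
  ultimately have x: "x00 = n0 * a + n1 * b" "x01 = n0 * c" "x10 = n2 * a + n3 * b" "x11 = n2 * c"
    by simp_all
  have "mat2_mult (mat2_mult P (k0, k1, k2, k3)) (x00, x01, x10, x11) = mat2_mult P (a, c, b, 0)"
    by (simp only: mat2_mult_assoc KX)
  moreover have
    "{x00, x01, x10, x11} \<subseteq> right_principal (fst (mat2_mult (mat2_mult P (a, c, b, 0)) Q))"
    using PQ(3) unfolding x
    by (auto intro!: right_principal_add right_principal_mult_left[OF invariant])
  ultimately show ?thesis using mat2_invertible_mult[OF PQ(1) K(1)] PQ(2) by metis
qed

end

end

section \<open>Embedded \<open>2 \<times> 2\<close> operations\<close>

lemma index_mult_mat_sum:
  assumes "i < dim_row A" "j < dim_col B" "dim_col A = dim_row B"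
  shows "(A * B) $$ (i, j) = (\<Sum>t<dim_row B. A $$ (i, t) * B $$ (t, j))"
  using assms by (simp add: scalar_prod_def lessThan_atLeast0)

lemma sum_two_points_right:
  fixes f :: "nat \<Rightarrow> 'a::semiring_0"
  assumes "k < n" "l < n" "k \<noteq> l"
  shows "(\<Sum>t<n. f t * (if t = k then x else if t = l then y else 0)) = f k * x + f l * y"
proof -
  have "(\<Sum>t<n. f t * (if t = k then x else if t = l then y else 0)) =
        (\<Sum>t<n. (if t = k then f k * x else 0) + (if t = l then f l * y else 0))"
    by (rule sum.cong) (use assms in auto)
  also have "\<dots> = f k * x + f l * y" using assms by (simp add: sum.distrib)
  finally show ?thesis .
qed

lemma sum_two_points_left:
  fixes f :: "nat \<Rightarrow> 'a::semiring_0"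
  assumes "k < n" "l < n" "k \<noteq> l"
  shows "(\<Sum>t<n. (if t = k then x else if t = l then y else 0) * f t) = x * f k + y * f l"
proof -
  have "(\<Sum>t<n. (if t = k then x else if t = l then y else 0) * f t) =
        (\<Sum>t<n. (if t = k then x * f k else 0) + (if t = l then y * f l else 0))"
    by (rule sum.cong) (use assms in auto)
  also have "\<dots> = x * f k + y * f l" using assms by (simp add: sum.distrib)
  finally show ?thesis .
qed

fun mat2_embed :: "nat \<Rightarrow> nat \<Rightarrow> nat \<Rightarrow> 'a::ring_1 mat2 \<Rightarrow> 'a mat" where
  "mat2_embed n k l (a, b, c, d) = mat n n (\<lambda>(i, j).
     if i = k \<and> j = k then a else if i = k \<and> j = l then b
     else if i = l \<and> j = k then c else if i = l \<and> j = l then d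
     else if i = j then 1 else 0)"

lemma mat2_embed_carrier [simp]: "mat2_embed n k l M \<in> carrier_mat n n"
  by (cases M) simp

lemma index_mat2_embed:
  "i < n \<Longrightarrow> j < n \<Longrightarrow> mat2_embed n k l (a, b, c, d) $$ (i, j) =
    (if i = k \<and> j = k then a else if i = k \<and> j = l then b
     else if i = l \<and> j = k then c else if i = l \<and> j = l then d
     else if i = j then 1 else 0)"
  by simp

lemma dim_mat2_embed [simp]: "dim_row (mat2_embed n k l M) = n" "dim_col (mat2_embed n k l M) = n"
  by (cases M; simp)+

declare mat2_embed.simps [simp del]

lemma index_mult_mat2_embed_right:
  fixes A :: "'a::ring_1 mat"
  assumes A: "A \<in> carrier_mat m n" and kl: "k < n" "l < n" "k \<noteq> l" and ij: "i < m" "j < n"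
  shows "(A * mat2_embed n k l (a, b, c, d)) $$ (i, j) =
    (if j = k then A $$ (i, k) * a + A $$ (i, l) * c
     else if j = l then A $$ (i, k) * b + A $$ (i, l) * d else A $$ (i, j))"
proof -
  let ?E = "mat2_embed n k l (a, b, c, d)"
  have prod: "(A * ?E) $$ (i, j) = (\<Sum>t<n. A $$ (i, t) * ?E $$ (t, j))"
    using A ij by (subst index_mult_mat_sum) auto
  consider "j = k" | "j = l" | "j \<noteq> k" "j \<noteq> l" by blast
  then show ?thesis
  proof cases
    case 1
    have "(\<Sum>t<n. A $$ (i, t) * ?E $$ (t, j)) =
          (\<Sum>t<n. A $$ (i, t) * (if t = k then a else if t = l then c else 0))"
      by (rule sum.cong) (use 1 kl in \<open>auto simp: index_mat2_embed\<close>)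
    then show ?thesis using prod 1 sum_two_points_right[OF kl] by simp
  next
    case 2
    have "(\<Sum>t<n. A $$ (i, t) * ?E $$ (t, j)) =
          (\<Sum>t<n. A $$ (i, t) * (if t = k then b else if t = l then d else 0))"
      by (rule sum.cong) (use 2 kl in \<open>auto simp: index_mat2_embed\<close>)
    then show ?thesis using prod 2 kl sum_two_points_right[OF kl] by simp
  next
    case 3
    have "(\<Sum>t<n. A $$ (i, t) * ?E $$ (t, j)) = (\<Sum>t<n. if t = j then A $$ (i, j) else 0)"
      by (rule sum.cong) (use 3 kl ij in \<open>auto simp: index_mat2_embed\<close>)
    then show ?thesis using prod 3 ij by simp
  qed
qed

lemma index_mult_mat2_embed_left:
  fixes A :: "'a::ring_1 mat"
  assumes A: "A \<in> carrier_mat m n" and kl: "k < m" "l < m" "k \<noteq> l" and ij: "i < m" "j < n"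
  shows "(mat2_embed m k l (a, b, c, d) * A) $$ (i, j) =
    (if i = k then a * A $$ (k, j) + b * A $$ (l, j)
     else if i = l then c * A $$ (k, j) + d * A $$ (l, j) else A $$ (i, j))"
proof -
  let ?E = "mat2_embed m k l (a, b, c, d)"
  have prod: "(?E * A) $$ (i, j) = (\<Sum>t<m. ?E $$ (i, t) * A $$ (t, j))"
    using A ij by (subst index_mult_mat_sum) auto
  consider "i = k" | "i = l" | "i \<noteq> k" "i \<noteq> l" by blast
  then show ?thesis
  proof cases
    case 1
    have "(\<Sum>t<m. ?E $$ (i, t) * A $$ (t, j)) =
          (\<Sum>t<m. (if t = k then a else if t = l then b else 0) * A $$ (t, j))"
      by (rule sum.cong) (use 1 kl in \<open>auto simp: index_mat2_embed\<close>)
    then show ?thesis using prod 1 sum_two_points_left[OF kl] by simp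
  next
    case 2
    have "(\<Sum>t<m. ?E $$ (i, t) * A $$ (t, j)) =
          (\<Sum>t<m. (if t = k then c else if t = l then d else 0) * A $$ (t, j))"
      by (rule sum.cong) (use 2 kl in \<open>auto simp: index_mat2_embed\<close>)
    then show ?thesis using prod 2 kl sum_two_points_left[OF kl] by simp
  next
    case 3
    have "(\<Sum>t<m. ?E $$ (i, t) * A $$ (t, j)) = (\<Sum>t<m. if t = i then A $$ (i, j) else 0)"
      by (rule sum.cong) (use 3 kl ij in \<open>auto simp: index_mat2_embed\<close>)
    then show ?thesis using prod 3 ij by simp
  qed
qed

lemma mat2_embed_mult:
  assumes kl: "k < n" "l < n" "k \<noteq> l"
  shows "mat2_embed n k l M * mat2_embed n k l N =
    (mat2_embed n k l (mat2_mult M N) :: 'a::ring_1 mat)"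
proof -
  obtain a b c d where M: "M = (a, b, c, d)" by (cases M)
  obtain e f g h where N: "N = (e, f, g, h)" by (cases N)
  show ?thesis
  proof (rule eq_matI)
    fix i j assume "i < dim_row (mat2_embed n k l (mat2_mult M N) :: 'a mat)"
      "j < dim_col (mat2_embed n k l (mat2_mult M N) :: 'a mat)"
    then have ij: "i < n" "j < n" using mat2_embed_carrier by (metis carrier_matD)+
    show "(mat2_embed n k l M * mat2_embed n k l N) $$ (i, j) =
      mat2_embed n k l (mat2_mult M N) $$ (i, j)"
      unfolding M N index_mult_mat2_embed_left[OF mat2_embed_carrier kl ij] mat2_mult.simps
        index_mat2_embed[OF ij] index_mat2_embed[OF kl(1) ij(2)] index_mat2_embed[OF kl(2) ij(2)]
      using kl by (cases "i = j"; cases "i = k"; cases "i = l"; cases "j = k"; cases "j = l"; simp)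
  qed (simp_all add: M N)
qed

lemma mat2_embed_one: "mat2_embed n k l (1, 0, 0, 1) = (1\<^sub>m n :: 'a::ring_1 mat)"
proof (rule eq_matI)
  fix i j assume "i < dim_row (1\<^sub>m n :: 'a mat)" "j < dim_col (1\<^sub>m n :: 'a mat)"
  then have "i < n" "j < n" by auto
  then show "mat2_embed n k l (1, 0, 0, 1) $$ (i, j) = (1\<^sub>m n :: 'a mat) $$ (i, j)"
    by (cases "i = j"; cases "i = k"; cases "i = l"; simp add: mat2_embed.simps)
qed simp_all

lemma invertible_matI:
  assumes "P \<in> carrier_mat n n" "P' \<in> carrier_mat n n" "P * P' = 1\<^sub>m n" "P' * P = 1\<^sub>m n"
  shows "invertible_mat P"
  using assms unfolding invertible_mat_def inverts_mat_def by auto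

lemma invertible_mat_inverse:
  assumes "invertible_mat P" "P \<in> carrier_mat n n"
  shows "\<exists>P' \<in> carrier_mat n n. P * P' = 1\<^sub>m n \<and> P' * P = 1\<^sub>m n"
proof -
  obtain P' where P': "P * P' = 1\<^sub>m n" "P' * P = 1\<^sub>m (dim_row P')"
    using assms unfolding invertible_mat_def inverts_mat_def by auto
  have "dim_col P' = n"
    using arg_cong[OF P'(1), of dim_col] by (simp only: index_mult_mat index_one_mat)
  moreover have "dim_row P' = n"
    using arg_cong[OF P'(2), of dim_col] assms(2)
    by (simp only: index_mult_mat index_one_mat carrier_matD)
  ultimately show ?thesis using P' by (intro bexI[of _ P'] carrier_matI) simp_all
qed

lemma invertible_mat_mult:
  assumes P: "P \<in> carrier_mat n n" "invertible_mat P"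
    and Q: "Q \<in> carrier_mat n n" "invertible_mat Q"
  shows "invertible_mat (P * Q)"
proof -
  obtain P' where P': "P' \<in> carrier_mat n n" "P * P' = 1\<^sub>m n" "P' * P = 1\<^sub>m n"
    using invertible_mat_inverse[OF P(2,1)] by blast
  obtain Q' where Q': "Q' \<in> carrier_mat n n" "Q * Q' = 1\<^sub>m n" "Q' * Q = 1\<^sub>m n"
    using invertible_mat_inverse[OF Q(2,1)] by blast
  have "(P * Q) * (Q' * P') = P * (Q * (Q' * P'))"
    by (rule assoc_mult_mat) (use P Q P' Q' in auto)
  also have "Q * (Q' * P') = (Q * Q') * P'"
    by (rule assoc_mult_mat[symmetric]) (use Q P' Q' in auto)
  finally have 1: "(P * Q) * (Q' * P') = 1\<^sub>m n" using P P' Q' by simp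
  have "(Q' * P') * (P * Q) = Q' * (P' * (P * Q))"
    by (rule assoc_mult_mat) (use P Q P' Q' in auto)
  also have "P' * (P * Q) = (P' * P) * Q"
    by (rule assoc_mult_mat[symmetric]) (use P Q P' in auto)
  finally have 2: "(Q' * P') * (P * Q) = 1\<^sub>m n" using Q P' Q' by simp
  show ?thesis using invertible_matI[OF _ _ 1 2] P Q P' Q' by simp
qed

lemma invertible_mat_mat2_embed:
  assumes "k < n" "l < n" "k \<noteq> l" "mat2_invertible M"
  shows "invertible_mat (mat2_embed n k l M :: 'a::ring_1 mat)"
proof -
  obtain N where N: "mat2_mult M N = (1, 0, 0, 1)" "mat2_mult N M = (1, 0, 0, 1)"
    using assms(4) unfolding mat2_invertible_def by blast
  show ?thesis
  proof (rule invertible_matI)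
    show "mat2_embed n k l M * mat2_embed n k l N = 1\<^sub>m n"
      "mat2_embed n k l N * mat2_embed n k l M = 1\<^sub>m n"
      by (simp_all only: mat2_embed_mult[OF assms(1-3)] N mat2_embed_one)
  qed simp_all
qed

definition col_op :: "'a::ring_1 mat \<Rightarrow> nat \<Rightarrow> nat \<Rightarrow> 'a mat2 \<Rightarrow> 'a mat" where
  "col_op A k l M = A * mat2_embed (dim_col A) k l M"

definition row_op :: "'a::ring_1 mat \<Rightarrow> nat \<Rightarrow> nat \<Rightarrow> 'a mat2 \<Rightarrow> 'a mat" where
  "row_op A k l M = mat2_embed (dim_row A) k l M * A"

lemma dim_col_op [simp]:
  "dim_row (col_op A k l M) = dim_row A" "dim_col (col_op A k l M) = dim_col A"
  unfolding col_op_def by simp_all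

lemma dim_row_op [simp]:
  "dim_row (row_op A k l M) = dim_row A" "dim_col (row_op A k l M) = dim_col A"
  unfolding row_op_def by simp_all

lemma index_col_op:
  assumes "A \<in> carrier_mat m n" "k < n" "l < n" "k \<noteq> l" "i < m" "j < n"
  shows "col_op A k l (a, b, c, d) $$ (i, j) =
    (if j = k then A $$ (i, k) * a + A $$ (i, l) * c
     else if j = l then A $$ (i, k) * b + A $$ (i, l) * d else A $$ (i, j))"
  using index_mult_mat2_embed_right[OF assms] assms(1) unfolding col_op_def by simp

lemma index_row_op:
  assumes "A \<in> carrier_mat m n" "k < m" "l < m" "k \<noteq> l" "i < m" "j < n"
  shows "row_op A k l (a, b, c, d) $$ (i, j) =
    (if i = k then a * A $$ (k, j) + b * A $$ (l, j)
     else if i = l then c * A $$ (k, j) + d * A $$ (l, j) else A $$ (i, j))"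
  using index_mult_mat2_embed_left[OF assms] assms(1) unfolding row_op_def by simp

definition equivalent_mat :: "'a::ring_1 mat \<Rightarrow> 'a mat \<Rightarrow> bool" where
  "equivalent_mat A B \<longleftrightarrow> (\<exists>P Q. P \<in> carrier_mat (dim_row A) (dim_row A) \<and> invertible_mat P
     \<and> Q \<in> carrier_mat (dim_col A) (dim_col A) \<and> invertible_mat Q \<and> B = P * A * Q)"

lemma equivalent_mat_carrier:
  assumes "A \<in> carrier_mat m n" "equivalent_mat A B"
  shows "B \<in> carrier_mat m n"
  using assms unfolding equivalent_mat_def by auto

lemma invertible_mat_one [simp]: "invertible_mat (1\<^sub>m n)"
  by (rule invertible_matI[of _ n "1\<^sub>m n"]) simp_all

lemma equivalent_mat_refl: "equivalent_mat A A"
proof -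
  have "A = 1\<^sub>m (dim_row A) * A * 1\<^sub>m (dim_col A)" by simp
  then show ?thesis unfolding equivalent_mat_def by (meson invertible_mat_one one_carrier_mat)
qed

lemma equivalent_mat_trans:
  assumes A: "A \<in> carrier_mat m n" and "equivalent_mat A B" "equivalent_mat B C"
  shows "equivalent_mat A C"
proof -
  obtain P Q where PQ: "P \<in> carrier_mat m m" "invertible_mat P"
      "Q \<in> carrier_mat n n" "invertible_mat Q"
      "B = P * A * Q"
    using assms(2) A unfolding equivalent_mat_def by auto
  then have B: "B \<in> carrier_mat m n" using A by auto
  obtain P' Q' where PQ': "P' \<in> carrier_mat m m" "invertible_mat P'" "Q' \<in> carrier_mat n n"
      "invertible_mat Q'" "C = P' * B * Q'"
    using assms(3) B unfolding equivalent_mat_def by auto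
  have "C = P' * ((P * A) * Q) * Q'" using PQ(5) PQ'(5) by simp
  also have "\<dots> = (P' * P) * A * (Q * Q')"
    using A PQ(1,3) PQ'(1,3)
    by (simp add: assoc_mult_mat[of _ m m _ n _ n] assoc_mult_mat[of _ m m _ m _ n]
        assoc_mult_mat[of _ m n _ n _ n])
  finally have "C = (P' * P) * A * (Q * Q')" .
  moreover have "invertible_mat (P' * P)" "invertible_mat (Q * Q')"
    using PQ PQ' invertible_mat_mult by blast+
  moreover have "P' * P \<in> carrier_mat m m" "Q * Q' \<in> carrier_mat n n" using PQ PQ' by auto
  moreover have "dim_row A = m" "dim_col A = n" using A by auto
  ultimately show ?thesis unfolding equivalent_mat_def by metis
qed

lemma equivalent_mat_col_op:
  assumes "A \<in> carrier_mat m n" "k < n" "l < n" "k \<noteq> l" "mat2_invertible M"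
  shows "equivalent_mat A (col_op A k l M)"
proof -
  have "col_op A k l M = 1\<^sub>m m * A * mat2_embed n k l M" using assms(1) unfolding col_op_def by simp
  then show ?thesis unfolding equivalent_mat_def
    using assms invertible_mat_mat2_embed[OF assms(2-5)]
    by (metis carrier_matD invertible_mat_one mat2_embed_carrier one_carrier_mat)
qed

lemma equivalent_mat_row_op:
  assumes "A \<in> carrier_mat m n" "k < m" "l < m" "k \<noteq> l" "mat2_invertible M"
  shows "equivalent_mat A (row_op A k l M)"
proof -
  have "row_op A k l M = mat2_embed m k l M * A * 1\<^sub>m n" using assms(1) unfolding row_op_def by simp
  then show ?thesis unfolding equivalent_mat_def
    using assms invertible_mat_mat2_embed[OF assms(2-5)]
    by (metis carrier_matD invertible_mat_one mat2_embed_carrier one_carrier_mat)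
qed

section \<open>Diagonal reduction\<close>

definition dvd_entries :: "'a::ring_1 \<Rightarrow> nat set \<Rightarrow> nat set \<Rightarrow> 'a mat \<Rightarrow> bool" where
  "dvd_entries d I J A \<longleftrightarrow>
    (\<forall>i\<in>I. \<forall>j\<in>J. i < dim_row A \<longrightarrow> j < dim_col A \<longrightarrow> A $$ (i, j) \<in> right_principal d)"

lemma dvd_entries_trans: "dvd_entries b I J A \<Longrightarrow> b \<in> right_principal a \<Longrightarrow> dvd_entries a I J A"
  unfolding dvd_entries_def using right_principal_trans by blast

lemma dvd_entries_Un: "dvd_entries d I (J \<union> J') A \<longleftrightarrow> dvd_entries d I J A \<and> dvd_entries d I J' A"
  unfolding dvd_entries_def by blast

lemma dvd_entries_zero:
  "dvd_entries 0 I J A \<longleftrightarrow> (\<forall>i\<in>I. \<forall>j\<in>J. i < dim_row A \<longrightarrow> j < dim_col A \<longrightarrow> A $$ (i, j) = 0)"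
  unfolding dvd_entries_def by simp

lemma dvd_entries_col_op:
  assumes A: "A \<in> carrier_mat m n" and kl: "k < n" "l < n" "k \<noteq> l" "k \<in> J" "l \<in> J"
    and "dvd_entries d I J A"
  shows "dvd_entries d I J (col_op A k l M)"
  unfolding dvd_entries_def
proof (intro ballI impI)
  fix i j assume ij: "i \<in> I" "j \<in> J" "i < dim_row (col_op A k l M)" "j < dim_col (col_op A k l M)"
  then have "i < m" "j < n" using A by simp_all
  then have "A $$ (i, k) \<in> right_principal d" "A $$ (i, l) \<in> right_principal d"
    "A $$ (i, j) \<in> right_principal d"
    using assms ij A unfolding dvd_entries_def by auto
  moreover obtain a b c e where "M = (a, b, c, e)" by (cases M)
  ultimately show "col_op A k l M $$ (i, j) \<in> right_principal d"
    using index_col_op[OF A kl(1-3) \<open>i < m\<close> \<open>j < n\<close>]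
    by (simp add: right_principal_add right_principal_mult_right)
qed

lemma dvd_entries_row_op:
  assumes invariant: "invariant_ring TYPE('a::ring_1)"
    and A: "A \<in> carrier_mat m n" and kl: "k < m" "l < m" "k \<noteq> l" "k \<in> I" "l \<in> I"
    and "dvd_entries d I J (A :: 'a mat)"
  shows "dvd_entries d I J (row_op A k l M)"
  unfolding dvd_entries_def
proof (intro ballI impI)
  fix i j assume ij: "i \<in> I" "j \<in> J" "i < dim_row (row_op A k l M)" "j < dim_col (row_op A k l M)"
  then have "i < m" "j < n" using A by simp_all
  then have "A $$ (k, j) \<in> right_principal d" "A $$ (l, j) \<in> right_principal d"
    "A $$ (i, j) \<in> right_principal d"
    using assms ij A unfolding dvd_entries_def by auto
  moreover obtain a b c e where "M = (a, b, c, e)" by (cases M)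
  ultimately show "row_op A k l M $$ (i, j) \<in> right_principal d"
    using index_row_op[OF A kl(1-3) \<open>i < m\<close> \<open>j < n\<close>]
    by (simp add: right_principal_add right_principal_mult_left[OF invariant])
qed

definition diagonal_prefix :: "nat \<Rightarrow> 'a::zero mat \<Rightarrow> bool" where
  "diagonal_prefix s A \<longleftrightarrow>
    (\<forall>i j. i < dim_row A \<longrightarrow> j < dim_col A \<longrightarrow> (i < s \<or> j < s) \<longrightarrow> i \<noteq> j \<longrightarrow> A $$ (i, j) = 0)"

text \<open>The last conjunct keeps every common divisor of the block entries; this is what makes the
  pivot of one stage divide the pivot of the next.\<close>

definition block_equivalent :: "nat \<Rightarrow> 'a::ring_1 mat \<Rightarrow> 'a mat \<Rightarrow> bool" where
  "block_equivalent s A B \<longleftrightarrow> equivalent_mat A B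
    \<and> (\<forall>i j. i < dim_row A \<longrightarrow> j < dim_col A \<longrightarrow> (i < s \<or> j < s) \<longrightarrow> B $$ (i, j) = A $$ (i, j))
    \<and> (\<forall>d. dvd_entries d {s..} {s..} A \<longrightarrow> dvd_entries d {s..} {s..} B)"

lemma block_equivalent_refl: "block_equivalent s A A"
  unfolding block_equivalent_def using equivalent_mat_refl by blast

lemma block_equivalent_carrier:
  "A \<in> carrier_mat m n \<Longrightarrow> block_equivalent s A B \<Longrightarrow> B \<in> carrier_mat m n"
  unfolding block_equivalent_def using equivalent_mat_carrier by blast

lemma block_equivalent_trans:
  assumes A: "A \<in> carrier_mat m n" and AB: "block_equivalent s A B" and BC: "block_equivalent s B C"
  shows "block_equivalent s A C"
proof -
  have "B \<in> carrier_mat m n" using block_equivalent_carrier[OF A AB] .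
  then show ?thesis using assms equivalent_mat_trans[OF A] unfolding block_equivalent_def by auto
qed

lemma block_equivalent_outside:
  "A \<in> carrier_mat m n \<Longrightarrow> block_equivalent s A B \<Longrightarrow> i < m \<Longrightarrow> j < n \<Longrightarrow> i < s \<or> j < s
    \<Longrightarrow> B $$ (i, j) = A $$ (i, j)"
  unfolding block_equivalent_def by auto

lemma diagonal_prefix_block_equivalent:
  "A \<in> carrier_mat m n \<Longrightarrow> block_equivalent s A B \<Longrightarrow> diagonal_prefix s A \<Longrightarrow> diagonal_prefix s B"
  using block_equivalent_carrier[of A m n s B]
  unfolding block_equivalent_def diagonal_prefix_def by auto

lemma block_equivalent_col_op:
  assumes A: "A \<in> carrier_mat m n" "diagonal_prefix s A"
    and kl: "s \<le> k" "s \<le> l" "k < n" "l < n" "k \<noteq> l" and M: "mat2_invertible M"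
  shows "block_equivalent s A (col_op A k l M)"
proof -
  obtain a b c d where Md: "M = (a, b, c, d)" by (cases M)
  have "col_op A k l M $$ (i, j) = A $$ (i, j)" if "i < m" "j < n" "i < s \<or> j < s" for i j
  proof (cases "j = k \<or> j = l")
    case True
    then have "A $$ (i, k) = 0" "A $$ (i, l) = 0" "A $$ (i, j) = 0"
      using A that kl unfolding diagonal_prefix_def by auto
    then show ?thesis unfolding Md index_col_op[OF A(1) kl(3-5) that(1,2)] by simp
  next
    case False
    then show ?thesis unfolding Md index_col_op[OF A(1) kl(3-5) that(1,2)] by simp
  qed
  moreover have "dvd_entries d {s..} {s..} (col_op A k l M)" if "dvd_entries d {s..} {s..} A" for d
    using dvd_entries_col_op[OF A(1) kl(3-5) _ _ that] kl by simp
  ultimately show ?thesis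
    unfolding block_equivalent_def using equivalent_mat_col_op[OF A(1) kl(3-5) M] A(1) by auto
qed

lemma block_equivalent_row_op:
  assumes invariant: "invariant_ring TYPE('a::ring_1)"
    and A: "A \<in> carrier_mat m n" "diagonal_prefix s (A :: 'a mat)"
    and kl: "s \<le> k" "s \<le> l" "k < m" "l < m" "k \<noteq> l" and M: "mat2_invertible M"
  shows "block_equivalent s A (row_op A k l M)"
proof -
  obtain a b c d where Md: "M = (a, b, c, d)" by (cases M)
  have "row_op A k l M $$ (i, j) = A $$ (i, j)" if "i < m" "j < n" "i < s \<or> j < s" for i j
  proof (cases "i = k \<or> i = l")
    case True
    then have "A $$ (k, j) = 0" "A $$ (l, j) = 0" "A $$ (i, j) = 0"
      using A that kl unfolding diagonal_prefix_def by auto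
    then show ?thesis unfolding Md index_row_op[OF A(1) kl(3-5) that(1,2)] by simp
  next
    case False
    then show ?thesis unfolding Md index_row_op[OF A(1) kl(3-5) that(1,2)] by simp
  qed
  moreover have "dvd_entries d {s..} {s..} (row_op A k l M)" if "dvd_entries d {s..} {s..} A" for d
    using dvd_entries_row_op[OF invariant A(1) kl(3-5) _ _ that] kl by simp
  ultimately show ?thesis
    unfolding block_equivalent_def using equivalent_mat_row_op[OF A(1) kl(3-5) M] A(1) by auto
qed

definition pivot_reduced :: "nat \<Rightarrow> nat \<Rightarrow> 'a::ring_1 mat \<Rightarrow> bool" where
  "pivot_reduced s i B \<longleftrightarrow> (\<forall>j. s < j \<longrightarrow> j < dim_col B \<longrightarrow> B $$ (s, j) = 0)
    \<and> dvd_entries (B $$ (s, s)) {s..<i} {s..} B"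

lemma pivot_rows_dvd_entries:
  assumes C: "pivot_reduced s i C" "C \<in> carrier_mat m n" and "s < i"
    and row_i: "\<forall>j. Suc s < j \<longrightarrow> j < n \<longrightarrow> C $$ (i, j) = 0"
    and u: "{C $$ (s, s), C $$ (s, Suc s), C $$ (i, s), C $$ (i, Suc s)} \<subseteq> right_principal u"
  shows "dvd_entries u {s..<Suc i} {s..} C"
  unfolding dvd_entries_def
proof (intro ballI impI)
  fix k j assume kj: "k \<in> {s..<Suc i}" "j \<in> {s..}" "k < dim_row C" "j < dim_col C"
  consider "k < i" | "k = i" "j \<le> Suc s" | "k = i" "Suc s < j" using kj by fastforce
  then show "C $$ (k, j) \<in> right_principal u"
  proof cases
    case 1
    then have "C $$ (k, j) \<in> right_principal (C $$ (s, s))"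
      using C(1) kj unfolding pivot_reduced_def dvd_entries_def by auto
    then show ?thesis using u right_principal_trans by blast
  next
    case 2
    then have "j = s \<or> j = Suc s" using kj by auto
    then show ?thesis using u 2 by auto
  qed (use row_i C(2) kj in auto)
qed

lemma pivot_row_zero:
  assumes "B \<in> carrier_mat m n" "diagonal_prefix s B" "pivot_reduced s i B" "s < m" "j < n" "j \<noteq> s"
  shows "B $$ (s, j) = 0"
  using assms unfolding pivot_reduced_def diagonal_prefix_def by (metis carrier_matD nat_neq_iff)

context
  assumes invariant: "invariant_ring TYPE('a::ring_1)"
begin

lemma transvection_clear_entry:
  assumes B: "B \<in> carrier_mat m n" "diagonal_prefix s (B :: 'a mat)" and st: "s < t" "t < m" "s < n"
    and dvd: "B $$ (t, s) \<in> right_principal (B $$ (s, s))"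
    and row_s: "\<forall>j. j < n \<longrightarrow> j \<noteq> s \<longrightarrow> B $$ (s, j) = 0"
  shows "\<exists>C. block_equivalent s B C
    \<and> (\<forall>r j. r < m \<longrightarrow> j < n \<longrightarrow> C $$ (r, j) = (if (r, j) = (t, s) then 0 else B $$ (r, j)))"
proof -
  obtain \<tau> where \<tau>: "B $$ (t, s) = \<tau> * B $$ (s, s)"
    using dvd shift_factor_left[OF invariant] unfolding right_principal_iff by metis
  let ?C = "row_op B s t (1, 0, - \<tau>, 1)"
  have kl: "s < m" "t < m" "s \<noteq> t" using st by auto
  have "block_equivalent s B ?C"
    using block_equivalent_row_op[OF invariant B _ _ kl mat2_invertible_transvection] st by simp
  moreover have "?C $$ (r, j) = (if (r, j) = (t, s) then 0 else B $$ (r, j))"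
    if "r < m" "j < n" for r j
    using index_row_op[OF B(1) kl that] \<tau> row_s that kl by auto
  ultimately show ?thesis by blast
qed

lemma clear_pivot_column_upto:
  assumes B: "B \<in> carrier_mat m n" "diagonal_prefix s (B :: 'a mat)" "pivot_reduced s m B"
    and "s < m" "s < n" and t: "Suc s \<le> t" "t \<le> m"
  shows "\<exists>C. block_equivalent s B C \<and> (\<forall>r j. r < m \<longrightarrow> j < n \<longrightarrow>
    C $$ (r, j) = (if j = s \<and> s < r \<and> r < t then 0 else B $$ (r, j)))"
  using t
proof (induction t rule: dec_induct)
  case base
  show ?case using block_equivalent_refl by (intro exI[of _ B]) auto
next
  case (step t)
  obtain C where C: "block_equivalent s B C" "\<forall>r j. r < m \<longrightarrow> j < n \<longrightarrow>
      C $$ (r, j) = (if j = s \<and> s < r \<and> r < t then 0 else B $$ (r, j))"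
    using step by auto
  have Cc: "C \<in> carrier_mat m n" "diagonal_prefix s C"
    using block_equivalent_carrier[OF B(1) C(1)]
      diagonal_prefix_block_equivalent[OF B(1) C(1) B(2)] .
  have "B $$ (t, s) \<in> right_principal (B $$ (s, s))"
    using B(1,3) step \<open>s < n\<close> unfolding pivot_reduced_def dvd_entries_def by auto
  then obtain C' where C': "block_equivalent s C C'" "\<forall>r j. r < m \<longrightarrow> j < n \<longrightarrow>
      C' $$ (r, j) = (if (r, j) = (t, s) then 0 else C $$ (r, j))"
    using transvection_clear_entry[OF Cc, of t] C(2) pivot_row_zero[OF B] step \<open>s < m\<close> \<open>s < n\<close>
    by auto
  show ?case
    using block_equivalent_trans[OF B(1) C(1) C'(1)] C(2) C'(2) step by (auto simp: less_Suc_eq)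
qed

lemma clear_pivot_column:
  assumes B: "B \<in> carrier_mat m n" "diagonal_prefix s (B :: 'a mat)" "pivot_reduced s m B"
    and "s < m" "s < n"
  shows "\<exists>D. block_equivalent s B D \<and> diagonal_prefix (Suc s) D \<and> D $$ (s, s) = B $$ (s, s)
    \<and> dvd_entries (B $$ (s, s)) {Suc s..} {Suc s..} D"
proof -
  obtain D where D: "block_equivalent s B D"
    "\<forall>r j. r < m \<longrightarrow> j < n \<longrightarrow> D $$ (r, j) = (if j = s \<and> s < r then 0 else B $$ (r, j))"
    using clear_pivot_column_upto[OF assms, of m] \<open>s < m\<close> by auto
  have Dc: "D \<in> carrier_mat m n" using block_equivalent_carrier[OF B(1) D(1)] .
  have "diagonal_prefix (Suc s) D"
    using B(1,2) Dc D(2) pivot_row_zero[OF B \<open>s < m\<close>] unfolding diagonal_prefix_def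
    by (metis carrier_matD less_SucE nat_neq_iff)
  moreover have "dvd_entries (B $$ (s, s)) {Suc s..} {Suc s..} D"
    using B(1,3) Dc D(2) unfolding pivot_reduced_def dvd_entries_def by auto
  ultimately show ?thesis using D \<open>s < m\<close> \<open>s < n\<close> by auto
qed

end

context
  assumes invariant: "invariant_ring TYPE('a::ring_1_no_zero_divisors)"
    and bezout: "bezout_ring TYPE('a)"
begin

lemma col_op_gcd_step:
  assumes B: "B \<in> carrier_mat m n" "diagonal_prefix s (B :: 'a mat)"
    and i: "i < m" and st: "s \<le> s'" "s' < t" "t < n"
  shows "\<exists>C. block_equivalent s B C
    \<and> (\<forall>r j. r < m \<longrightarrow> j < n \<longrightarrow> j \<noteq> s' \<longrightarrow> j \<noteq> t \<longrightarrow> C $$ (r, j) = B $$ (r, j))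
    \<and> (\<forall>d I. dvd_entries d I {s'..} B \<longrightarrow> dvd_entries d I {s'..} C)
    \<and> C $$ (i, t) = 0 \<and> B $$ (i, s') \<in> right_principal (C $$ (i, s'))
    \<and> B $$ (i, t) \<in> right_principal (C $$ (i, s'))"
proof -
  obtain a b c d e where R: "mat2_invertible (a, b, c, d)"
      "B $$ (i, s') * a + B $$ (i, t) * c = e" "B $$ (i, s') * b + B $$ (i, t) * d = 0"
      "B $$ (i, s') \<in> right_principal e" "B $$ (i, t) \<in> right_principal e"
    using row_vector_reduction[OF invariant bezout] by blast
  let ?C = "col_op B s' t (a, b, c, d)"
  have kl: "s' < n" "t < n" "s' \<noteq> t" using st by auto
  note idx = index_col_op[OF B(1) kl]
  have "block_equivalent s B ?C" using block_equivalent_col_op[OF B _ _ kl R(1)] st by simp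
  moreover have "dvd_entries d I {s'..} ?C" if "dvd_entries d I {s'..} B" for d I
    using dvd_entries_col_op[OF B(1) kl _ _ that] st by simp
  moreover have "?C $$ (i, t) = 0" "?C $$ (i, s') = e" using idx[OF i] kl R(2,3) by auto
  ultimately show ?thesis using idx R(4,5) by auto
qed

lemma row_gcd_by_col_ops_upto:
  assumes A: "A \<in> carrier_mat m n" "diagonal_prefix s (A :: 'a mat)"
    and i: "i < m" and s': "s \<le> s'" and t: "Suc s' \<le> t" "t \<le> n"
  shows "\<exists>B. block_equivalent s A B
    \<and> (\<forall>r j. r < m \<longrightarrow> j < n \<longrightarrow> (j < s' \<or> t \<le> j) \<longrightarrow> B $$ (r, j) = A $$ (r, j))
    \<and> (\<forall>d I. dvd_entries d I {s'..} A \<longrightarrow> dvd_entries d I {s'..} B)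
    \<and> (\<forall>j. s' < j \<longrightarrow> j < t \<longrightarrow> B $$ (i, j) = 0)
    \<and> (\<forall>j. s' \<le> j \<longrightarrow> j < t \<longrightarrow> A $$ (i, j) \<in> right_principal (B $$ (i, s')))"
  using t
proof (induction t rule: dec_induct)
  case base
  have "A $$ (i, j) \<in> right_principal (A $$ (i, s'))" if "s' \<le> j" "j < Suc s'" for j
    using that by (simp add: le_less_Suc_eq)
  then show ?case using block_equivalent_refl by (intro exI[of _ A]) auto
next
  case (step t)
  have st: "s' < t" "t < n" using step.hyps(1) step.prems by simp_all
  obtain B where B: "block_equivalent s A B"
    "\<forall>r j. r < m \<longrightarrow> j < n \<longrightarrow> (j < s' \<or> t \<le> j) \<longrightarrow> B $$ (r, j) = A $$ (r, j)"
    "\<forall>d I. dvd_entries d I {s'..} A \<longrightarrow> dvd_entries d I {s'..} B"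
    "\<forall>j. s' < j \<longrightarrow> j < t \<longrightarrow> B $$ (i, j) = 0"
    "\<forall>j. s' \<le> j \<longrightarrow> j < t \<longrightarrow> A $$ (i, j) \<in> right_principal (B $$ (i, s'))"
    using step.IH st by auto
  have Bc: "B \<in> carrier_mat m n" using block_equivalent_carrier[OF A(1) B(1)] .
  have "diagonal_prefix s B" using diagonal_prefix_block_equivalent[OF A(1) B(1) A(2)] .
  obtain C where C: "block_equivalent s B C"
    "\<forall>r j. r < m \<longrightarrow> j < n \<longrightarrow> j \<noteq> s' \<longrightarrow> j \<noteq> t \<longrightarrow> C $$ (r, j) = B $$ (r, j)"
    "\<forall>d I. dvd_entries d I {s'..} B \<longrightarrow> dvd_entries d I {s'..} C"
    "C $$ (i, t) = 0" "B $$ (i, s') \<in> right_principal (C $$ (i, s'))"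
    "B $$ (i, t) \<in> right_principal (C $$ (i, s'))"
    using col_op_gcd_step[OF Bc \<open>diagonal_prefix s B\<close> i s' st] by blast
  have "A $$ (i, j) \<in> right_principal (C $$ (i, s'))" if "s' \<le> j" "j < Suc t" for j
  proof (cases "j = t")
    case True
    then show ?thesis using B(2) C(6) i st by auto
  next
    case False
    then have "A $$ (i, j) \<in> right_principal (B $$ (i, s'))" using B(5) that by simp
    then show ?thesis using C(5) by (rule right_principal_trans)
  qed
  moreover have "block_equivalent s A C" using block_equivalent_trans[OF A(1) B(1) C(1)] .
  ultimately show ?case using B C i st by (intro exI[of _ C]) (auto simp: less_Suc_eq)
qed

lemma row_gcd_by_col_ops:
  assumes A: "A \<in> carrier_mat m n" "diagonal_prefix s (A :: 'a mat)"
    and i: "i < m" and s': "s \<le> s'" "s' < n"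
  shows "\<exists>B. block_equivalent s A B
    \<and> (\<forall>r j. r < m \<longrightarrow> j < s' \<longrightarrow> B $$ (r, j) = A $$ (r, j))
    \<and> (\<forall>d I. dvd_entries d I {s'..} A \<longrightarrow> dvd_entries d I {s'..} B)
    \<and> (\<forall>j. s' < j \<longrightarrow> j < n \<longrightarrow> B $$ (i, j) = 0)
    \<and> dvd_entries (B $$ (i, s')) {i} {s'..} A"
proof -
  obtain B where B: "block_equivalent s A B"
    "\<forall>r j. r < m \<longrightarrow> j < n \<longrightarrow> j < s' \<longrightarrow> B $$ (r, j) = A $$ (r, j)"
    "\<forall>d I. dvd_entries d I {s'..} A \<longrightarrow> dvd_entries d I {s'..} B"
    "\<forall>j. s' < j \<longrightarrow> j < n \<longrightarrow> B $$ (i, j) = 0"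
    "\<forall>j. s' \<le> j \<longrightarrow> j < n \<longrightarrow> A $$ (i, j) \<in> right_principal (B $$ (i, s'))"
    using row_gcd_by_col_ops_upto[OF A i s'(1), of n] s' by auto
  moreover have "dvd_entries (B $$ (i, s')) {i} {s'..} A"
    using B(5) A(1) unfolding dvd_entries_def by auto
  ultimately show ?thesis using s' by (intro exI[of _ B]) auto
qed

lemma pivot_stage_start:
  assumes A: "A \<in> carrier_mat m n" "diagonal_prefix s (A :: 'a mat)" and "s < m" "s < n"
  shows "\<exists>B. block_equivalent s A B \<and> pivot_reduced s (Suc s) B"
proof -
  obtain B where B: "block_equivalent s A B" "\<forall>j. s < j \<longrightarrow> j < n \<longrightarrow> B $$ (s, j) = 0"
    using row_gcd_by_col_ops[OF A \<open>s < m\<close> order.refl \<open>s < n\<close>] by blast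
  have "B \<in> carrier_mat m n" using block_equivalent_carrier[OF A(1) B(1)] .
  then have "pivot_reduced s (Suc s) B"
    using B(2) unfolding pivot_reduced_def dvd_entries_def by (auto simp: le_less_Suc_eq le_less)
  with B(1) show ?thesis by blast
qed

lemma pivot_stage_step_single_column:
  assumes B: "B \<in> carrier_mat m (Suc s)" "diagonal_prefix s (B :: 'a mat)" "pivot_reduced s i B"
    and i: "s < i" "i < m"
  shows "\<exists>C. block_equivalent s B C \<and> pivot_reduced s (Suc i) C"
proof -
  obtain a b c d e where R: "mat2_invertible (a, b, c, d)"
      "a * B $$ (s, s) + b * B $$ (i, s) = e" "c * B $$ (s, s) + d * B $$ (i, s) = 0"
      "B $$ (s, s) \<in> right_principal e"
    using column_vector_reduction[OF invariant bezout] by blast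
  let ?C = "row_op B s i (a, b, c, d)"
  have kl: "s < m" "i < m" "s \<noteq> i" using i by auto
  note idx = index_row_op[OF B(1) kl]
  have "?C $$ (k, s) \<in> right_principal e" if k: "s \<le> k" "k < Suc i" for k
  proof -
    consider "k = s" | "k = i" | "s < k" "k < i" using k by linarith
    then show ?thesis
    proof cases
      case 3
      then have "B $$ (k, s) \<in> right_principal (B $$ (s, s))"
        using B(1,3) i unfolding pivot_reduced_def dvd_entries_def by auto
      then show ?thesis using idx[of k s] 3 i R(4) right_principal_trans by auto
    qed (use idx[of s s] idx[of i s] kl R(2,3) in auto)
  qed
  moreover have "?C $$ (s, s) = e" using idx[of s s] kl R(2) by simp
  ultimately have "pivot_reduced s (Suc i) ?C"
    using B(1) unfolding pivot_reduced_def dvd_entries_def by (auto simp: le_less_Suc_eq)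
  moreover have "block_equivalent s B ?C"
    using block_equivalent_row_op[OF invariant B(1,2) _ _ kl R(1)] i by simp
  ultimately show ?thesis by blast
qed

lemma pivot_stage_clear_row:
  assumes B: "B \<in> carrier_mat m n" "diagonal_prefix s (B :: 'a mat)" "pivot_reduced s i B"
    and i: "s < i" "i < m" and n: "Suc s < n"
  shows "\<exists>C. block_equivalent s B C \<and> pivot_reduced s i C \<and> C $$ (s, s) = B $$ (s, s)
    \<and> (\<forall>j. Suc s < j \<longrightarrow> j < n \<longrightarrow> C $$ (i, j) = 0)"
proof -
  obtain C where C: "block_equivalent s B C" "\<forall>r j. r < m \<longrightarrow> j < Suc s \<longrightarrow> C $$ (r, j) = B $$ (r, j)"
      "\<forall>d I. dvd_entries d I {Suc s..} B \<longrightarrow> dvd_entries d I {Suc s..} C"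
      "\<forall>j. Suc s < j \<longrightarrow> j < n \<longrightarrow> C $$ (i, j) = 0"
    using row_gcd_by_col_ops[OF B(1,2) i(2) _ n] by auto
  have Cc: "C \<in> carrier_mat m n" using block_equivalent_carrier[OF B(1) C(1)] .
  have Css: "C $$ (s, s) = B $$ (s, s)" using C(2) i by simp
  have "dvd_entries 0 {s} {Suc s..} B" "dvd_entries (B $$ (s, s)) {s..<i} {Suc s..} B"
    using B(1,3) unfolding pivot_reduced_def dvd_entries_def by auto
  then have row_s: "dvd_entries 0 {s} {Suc s..} C"
    and right: "dvd_entries (B $$ (s, s)) {s..<i} {Suc s..} C"
    using C(3) by blast+
  have left: "dvd_entries (B $$ (s, s)) {s..<i} {s} C"
    unfolding dvd_entries_def
  proof (intro ballI impI)
    fix k j assume kj: "k \<in> {s..<i}" "j \<in> {s}" "k < dim_row C" "j < dim_col C"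
    then have "k < m" "C $$ (k, j) = B $$ (k, s)" using C(2) Cc by auto
    moreover have "B $$ (k, s) \<in> right_principal (B $$ (s, s))"
      using B(1,3) kj(1) \<open>k < m\<close> n unfolding pivot_reduced_def dvd_entries_def by auto
    ultimately show "C $$ (k, j) \<in> right_principal (B $$ (s, s))" by simp
  qed
  have "{s..} = {s} \<union> {Suc s..}" by auto
  then have "dvd_entries (C $$ (s, s)) {s..<i} {s..} C"
    using left right unfolding Css by (simp only: dvd_entries_Un)
  then have "pivot_reduced s i C"
    using row_s Cc i unfolding pivot_reduced_def dvd_entries_zero by auto
  with C(1,4) Css show ?thesis by blast
qed

end

context
  assumes invariant: "invariant_ring TYPE('a::ring_1_no_zero_divisors)"
    and bezout: "bezout_ring TYPE('a)" and sr2: "simple_range_2 TYPE('a)"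
begin

lemma pivot_stage_2x2:
  assumes C: "C \<in> carrier_mat m n" "diagonal_prefix s (C :: 'a mat)" "pivot_reduced s i C"
    and i: "s < i" "i < m" and n: "Suc s < n"
    and row_i: "\<forall>j. Suc s < j \<longrightarrow> j < n \<longrightarrow> C $$ (i, j) = 0"
  shows "\<exists>D. block_equivalent s C D \<and> dvd_entries (D $$ (s, s)) {s..<Suc i} {s..} D"
proof -
  define X where "X = (C $$ (s, s), C $$ (s, Suc s), C $$ (i, s), C $$ (i, Suc s))"
  obtain P Q where PQ: "mat2_invertible P" "mat2_invertible Q"
    "{C $$ (s, s), C $$ (s, Suc s), C $$ (i, s), C $$ (i, Suc s)}
      \<subseteq> right_principal (fst (mat2_mult (mat2_mult P X) Q))"
    using mat2_corner_divides_entries[OF invariant bezout sr2] unfolding X_def by blast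
  define u where "u = fst (mat2_mult (mat2_mult P X) Q)"
  have "dvd_entries u {s..<Suc i} {s..} C"
    using pivot_rows_dvd_entries[OF C(3,1) i(1) row_i] PQ(3) unfolding u_def .
  obtain p0 p1 p2 p3 where P: "P = (p0, p1, p2, p3)" by (cases P)
  obtain q0 q1 q2 q3 where Q: "Q = (q0, q1, q2, q3)" by (cases Q)
  let ?D1 = "row_op C s i P"
  let ?D = "col_op ?D1 s (Suc s) Q"
  have kl: "s < m" "i < m" "s \<noteq> i" and kl': "s < n" "Suc s < n" "s \<noteq> Suc s" using i n by auto
  have D1: "?D1 \<in> carrier_mat m n" "block_equivalent s C ?D1"
    using C(1) block_equivalent_row_op[OF invariant C(1,2) _ _ kl PQ(1)] i by auto
  have "diagonal_prefix s ?D1" using diagonal_prefix_block_equivalent[OF C(1) D1(2) C(2)] .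
  then have "block_equivalent s ?D1 ?D" using block_equivalent_col_op[OF D1(1) _ _ _ kl' PQ(2)] by simp
  then have "block_equivalent s C ?D" using block_equivalent_trans[OF C(1) D1(2)] by blast
  moreover have "dvd_entries u {s..<Suc i} {s..} ?D1"
    using dvd_entries_row_op[OF invariant C(1) kl _ _ \<open>dvd_entries u _ _ C\<close>] i by simp
  then have "dvd_entries u {s..<Suc i} {s..} ?D" using dvd_entries_col_op[OF D1(1) kl'] by simp
  moreover have "?D $$ (s, s) = u"
    using index_col_op[OF D1(1) kl' kl(1) kl'(1)] index_row_op[OF C(1) kl kl(1) kl'(1)]
      index_row_op[OF C(1) kl kl(1) kl'(2)] unfolding P Q u_def X_def by simp
  ultimately show ?thesis by auto
qed

lemma pivot_stage_step:
  assumes B: "B \<in> carrier_mat m n" "diagonal_prefix s (B :: 'a mat)" "pivot_reduced s i B"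
    and i: "s < i" "i < m" and n: "Suc s < n"
  shows "\<exists>E. block_equivalent s B E \<and> pivot_reduced s (Suc i) E"
proof -
  obtain C where C: "block_equivalent s B C" "pivot_reduced s i C"
      "\<forall>j. Suc s < j \<longrightarrow> j < n \<longrightarrow> C $$ (i, j) = 0"
    using pivot_stage_clear_row[OF invariant bezout B i n] by blast
  have Cc: "C \<in> carrier_mat m n" "diagonal_prefix s C"
    using block_equivalent_carrier[OF B(1) C(1)]
      diagonal_prefix_block_equivalent[OF B(1) C(1) B(2)] .
  obtain D where D: "block_equivalent s C D" "dvd_entries (D $$ (s, s)) {s..<Suc i} {s..} D"
    using pivot_stage_2x2[OF Cc C(2) i n C(3)] by blast
  have Dc: "D \<in> carrier_mat m n" "diagonal_prefix s D"
    using block_equivalent_carrier[OF Cc(1) D(1)]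
      diagonal_prefix_block_equivalent[OF Cc(1) D(1) Cc(2)] .
  obtain E where E: "block_equivalent s D E"
      "\<forall>d I. dvd_entries d I {s..} D \<longrightarrow> dvd_entries d I {s..} E"
      "\<forall>j. s < j \<longrightarrow> j < n \<longrightarrow> E $$ (s, j) = 0" "dvd_entries (E $$ (s, s)) {s} {s..} D"
    using row_gcd_by_col_ops[OF invariant bezout Dc _ order.refl, of s] i n by auto
  have "D $$ (s, s) \<in> right_principal (E $$ (s, s))"
    using E(4) Dc(1) i n unfolding dvd_entries_def by auto
  then have "dvd_entries (E $$ (s, s)) {s..<Suc i} {s..} E"
    using E(2) D(2) dvd_entries_trans by blast
  moreover have "E \<in> carrier_mat m n" using block_equivalent_carrier[OF Dc(1) E(1)] .
  ultimately have "pivot_reduced s (Suc i) E" using E(3) unfolding pivot_reduced_def by simp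
  moreover have "block_equivalent s B E"
    using block_equivalent_trans[OF B(1) block_equivalent_trans[OF B(1) C(1) D(1)] E(1)] .
  ultimately show ?thesis by blast
qed

lemma pivot_stage:
  assumes A: "A \<in> carrier_mat m n" "diagonal_prefix s (A :: 'a mat)" and "s < m" "s < n"
  shows "\<exists>B. block_equivalent s A B \<and> pivot_reduced s m B"
proof -
  have "\<exists>B. block_equivalent s A B \<and> pivot_reduced s i B" if "Suc s \<le> i" "i \<le> m" for i
    using that
  proof (induction i rule: dec_induct)
    case base
    show ?case using pivot_stage_start[OF invariant bezout A \<open>s < m\<close> \<open>s < n\<close>] .
  next
    case (step i)
    obtain B where B: "block_equivalent s A B" "pivot_reduced s i B" using step by auto
    have Bc: "B \<in> carrier_mat m n" "diagonal_prefix s B"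
      using block_equivalent_carrier[OF A(1) B(1)]
        diagonal_prefix_block_equivalent[OF A(1) B(1) A(2)] .
    have i: "s < i" "i < m" using step by auto
    have "\<exists>C. block_equivalent s B C \<and> pivot_reduced s (Suc i) C"
    proof (cases "n = Suc s")
      case True
      then show ?thesis
        using pivot_stage_step_single_column[OF invariant bezout _ Bc(2) B(2) i] Bc(1) by blast
    next
      case False
      then show ?thesis using pivot_stage_step[OF Bc B(2) i] \<open>s < n\<close> by simp
    qed
    then show ?case using block_equivalent_trans[OF A(1) B(1)] by blast
  qed
  then show ?thesis using \<open>s < m\<close> by simp
qed

lemma diagonal_reduction:
  assumes A: "A \<in> carrier_mat m n"
  shows "s \<le> min m n \<Longrightarrow> \<exists>B. equivalent_mat A (B :: 'a mat) \<and> diagonal_prefix s B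
    \<and> (\<forall>i. Suc i < s \<longrightarrow> B $$ (Suc i, Suc i) \<in> right_principal (B $$ (i, i)))
    \<and> (0 < s \<longrightarrow> dvd_entries (B $$ (s - 1, s - 1)) {s..} {s..} B)"
proof (induction s)
  case 0
  show ?case using equivalent_mat_refl unfolding diagonal_prefix_def by auto
next
  case (Suc s)
  then obtain B where B: "equivalent_mat A B" "diagonal_prefix s B"
     "\<forall>i. Suc i < s \<longrightarrow> B $$ (Suc i, Suc i) \<in> right_principal (B $$ (i, i))"
     "0 < s \<longrightarrow> dvd_entries (B $$ (s - 1, s - 1)) {s..} {s..} B" by auto
  have s: "s < m" "s < n" using Suc.prems by auto
  have Bc: "B \<in> carrier_mat m n" using equivalent_mat_carrier[OF A B(1)] .
  obtain C where C: "block_equivalent s B C" "pivot_reduced s m C"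
    using pivot_stage[OF Bc B(2) s] by blast
  have Cc: "C \<in> carrier_mat m n" "diagonal_prefix s C"
    using block_equivalent_carrier[OF Bc C(1)] diagonal_prefix_block_equivalent[OF Bc C(1) B(2)] .
  obtain D where D: "block_equivalent s C D" "diagonal_prefix (Suc s) D" "D $$ (s, s) = C $$ (s, s)"
      "dvd_entries (C $$ (s, s)) {Suc s..} {Suc s..} D"
    using clear_pivot_column[OF invariant Cc C(2) s] by blast
  have BD: "block_equivalent s B D" using block_equivalent_trans[OF Bc C(1) D(1)] .
  have diag: "D $$ (i, i) = B $$ (i, i)" if "i < s" for i
    using block_equivalent_outside[OF Bc BD] that s by simp
  have "D $$ (Suc i, Suc i) \<in> right_principal (D $$ (i, i))" if "Suc i < Suc s" for i
  proof (cases "Suc i < s")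
    case True
    then show ?thesis using B(3) diag by simp
  next
    case False
    then have i: "s = Suc i" using that by simp
    have "dvd_entries (B $$ (i, i)) {s..} {s..} C"
      using B(4) C(1) i unfolding block_equivalent_def by simp
    then have "C $$ (s, s) \<in> right_principal (B $$ (i, i))"
      using Cc(1) s unfolding dvd_entries_def by auto
    then show ?thesis using D(3) diag i by simp
  qed
  moreover have "equivalent_mat A D" using equivalent_mat_trans[OF A B(1)] BD
    unfolding block_equivalent_def by blast
  ultimately show ?case using D(2-4) by auto
qed

end

lemma right_principal_chain_zero:
  assumes chain: "\<forall>i. Suc i < N \<longrightarrow> e (Suc i) \<in> right_principal (e i)" and "e r = 0"
  shows "r \<le> i \<Longrightarrow> i < N \<Longrightarrow> e i = 0"
proof (induction i rule: dec_induct)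
  case (step i)
  then show ?case using chain by auto
qed (use \<open>e r = 0\<close> in simp)

lemma diagonal_normal_form:
  assumes B: "B \<in> carrier_mat m n" "diagonal_prefix (min m n) B"
    and chain: "\<forall>i. Suc i < min m n \<longrightarrow> B $$ (Suc i, Suc i) \<in> right_principal (B $$ (i, i))"
  shows "\<exists>\<epsilon> r. r \<le> min m n \<and> B = mat m n (\<lambda>(i, j). if i = j \<and> i < r then \<epsilon> i else 0)
    \<and> (\<forall>i<r. \<epsilon> i \<noteq> 0) \<and> (\<forall>i. Suc i < r \<longrightarrow> \<epsilon> (Suc i) \<in> right_principal (\<epsilon> i))"
proof -
  define \<epsilon> where "\<epsilon> i = B $$ (i, i)" for i
  define r where "r = (LEAST i. i = min m n \<or> \<epsilon> i = 0)"
  have r: "r \<le> min m n" unfolding r_def by (rule Least_le) simp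
  have nonzero: "\<epsilon> i \<noteq> 0" if "i < r" for i
    using not_less_Least[OF that[unfolded r_def]] that r by auto
  have "r = min m n \<or> \<epsilon> r = 0" unfolding r_def by (rule LeastI[of _ "min m n"]) simp
  then have zero: "\<epsilon> i = 0" if "r \<le> i" "i < min m n" for i
    using right_principal_chain_zero[of "min m n" \<epsilon> r i] chain that unfolding \<epsilon>_def by auto
  have "B = mat m n (\<lambda>(i, j). if i = j \<and> i < r then \<epsilon> i else 0)"
  proof (rule eq_matI)
    fix i j assume "i < dim_row (mat m n (\<lambda>(i, j). if i = j \<and> i < r then \<epsilon> i else 0))"
      "j < dim_col (mat m n (\<lambda>(i, j). if i = j \<and> i < r then \<epsilon> i else 0))"
    then have ij: "i < m" "j < n" by auto
    then have "i < min m n \<or> j < min m n" by (simp add: min_def)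
    then show "B $$ (i, j) = mat m n (\<lambda>(i, j). if i = j \<and> i < r then \<epsilon> i else 0) $$ (i, j)"
      using B ij zero unfolding diagonal_prefix_def \<epsilon>_def by (cases "i = j") auto
  qed (use B in auto)
  moreover have "\<forall>i. Suc i < r \<longrightarrow> \<epsilon> (Suc i) \<in> right_principal (\<epsilon> i)"
    using chain r unfolding \<epsilon>_def by auto
  ultimately show ?thesis using r nonzero by blast
qed

lemma invariant_ring_divisor_condition:
  assumes "invariant_ring TYPE('a::ring_1)" "a \<noteq> 0" "(x::'a) \<in> right_principal a"
  shows "two_sided_ideal x \<subseteq> right_principal a \<inter> left_principal a \<and> invariant_elem a"
proof -
  have "invariant_elem a" using assms(1,2) unfolding invariant_ring_def by blast
  moreover have "two_sided_ideal x \<subseteq> right_principal a"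
    using two_sided_ideal_subset_right_principal[OF assms(1)] right_principal_trans assms(3)
    by blast
  ultimately show ?thesis unfolding invariant_elem_def by blast
qed

theorem theorem3p7:
  assumes "invariant_ring TYPE('a::ring_1_no_zero_divisors)"
    and "bezout_ring TYPE('a)"
    and "simple_range_2 TYPE('a)"
  shows "DK_elementary_divisor_ring TYPE('a)"
  unfolding DK_elementary_divisor_ring_def
proof (intro allI impI)
  fix m n and A :: "'a mat"
  assume A: "A \<in> carrier_mat m n"
  obtain B where B: "equivalent_mat A B" "diagonal_prefix (min m n) B"
      "\<forall>i. Suc i < min m n \<longrightarrow> B $$ (Suc i, Suc i) \<in> right_principal (B $$ (i, i))"
    using diagonal_reduction[OF assms A order.refl] by blast
  obtain \<epsilon> r where \<epsilon>: "r \<le> min m n" "B = mat m n (\<lambda>(i, j). if i = j \<and> i < r then \<epsilon> i else 0)"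
      "\<forall>i<r. \<epsilon> i \<noteq> 0" "\<forall>i. Suc i < r \<longrightarrow> \<epsilon> (Suc i) \<in> right_principal (\<epsilon> i)"
    using diagonal_normal_form[OF equivalent_mat_carrier[OF A B(1)] B(2,3)] by blast
  obtain P Q where "P \<in> carrier_mat m m" "invertible_mat P" "Q \<in> carrier_mat n n" "invertible_mat Q"
      "P * A * Q = B"
    using B(1) A unfolding equivalent_mat_def by auto
  moreover have "two_sided_ideal (\<epsilon> (i + 1))
      \<subseteq> right_principal (\<epsilon> i) \<inter> left_principal (\<epsilon> i) \<and> invariant_elem (\<epsilon> i)" if "i + 1 < r" for i
    using invariant_ring_divisor_condition[OF assms(1), of "\<epsilon> i" "\<epsilon> (i + 1)"] \<epsilon>(3,4) that by simp
  ultimately show "\<exists>P Q \<epsilon> r. P \<in> carrier_mat m m \<and> invertible_mat P \<and> Q \<in> carrier_mat n n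
      \<and> invertible_mat Q \<and> r \<le> min m n
      \<and> P * A * Q = mat m n (\<lambda>(i, j). if i = j \<and> i < r then \<epsilon> i else 0) \<and> (\<forall>i<r. \<epsilon> i \<noteq> 0)
      \<and> (\<forall>i. i + 1 < r \<longrightarrow> two_sided_ideal (\<epsilon> (i + 1))
          \<subseteq> right_principal (\<epsilon> i) \<inter> left_principal (\<epsilon> i) \<and> invariant_elem (\<epsilon> i))"
    using \<epsilon>(1-3) by blast
qed

end
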